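(* Consider the online convex optimization protocol (with unbounded horizon) and the algorithm AOA described in the context, under the standing assumptions (A1)–(A3) (holding for all rounds $t\ge1$). Then for any interval $I=[r,s]\subseteq\mathbb{N}$ and any comparators $\mathbf{u}_r,\ldots,\mathbf{u}_{s+1}\in\Omega$, \[ \sum_{t=r}^s f_t(\mathbf{w}_t)-\sum_{t=r}^s f_t(\mathbf{u}_t)\le\Big(14\sqrt{c'(s)}+3\big[1+2\ln(k_I+1)\big]+23DG\Big)\sqrt{|I|}+5G\sqrt{DP_I}\sqrt{|I|}=O\big(\sqrt{|I|(\log s+P_I)}\big), \] where $c'(s)=1+\ln s+\ln(1+\log_2 s)+\ln\frac{5+3\ln(1+s)}{2}$, $P_I=\sum_{t=r}^s\|\mathbf{u}_{t+1}-\mathbf{u}_t\|_2$, and $k_I=\big\lfloor\tfrac12\log_2(1+\tfrac{4P_I}{7D})\big\rfloor+1$.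
   Context: Online convex optimization: $\Omega\subseteq\mathbb{R}^d$ convex; in round $t=1,2,\ldots$ the learner plays $\mathbf{w}_t\in\Omega$, then a convex $f_t:\Omega\to\mathbb{R}$ is revealed. Assumptions: (A1) $\|\nabla f_t(\mathbf{w})\|_2\le G$ for all $\mathbf{w}\in\Omega$, $t$; (A2) $\mathbf{0}\in\Omega$ and the diameter of $\Omega$ is at most $D$; (A3) $0\le f_t\le1$ on $\Omega$. $\Pi_\Omega$ is Euclidean projection; online gradient descent (OGD) with step $\eta$ updates $\mathbf{v}\mapsto\Pi_\Omega[\mathbf{v}-\eta\nabla f_t(\mathbf{v})]$. Geometric covering intervals: $\mathcal{I}=\bigcup_{k\ge0}\mathcal{I}_k$, $\mathcal{I}_k=\{[i2^k,(i+1)2^k-1]: i=1,2,\ldots\}$. Ader with input length $L$ (run over $L$ consecutive rounds): let $N=\lceil\frac12\log_2(1+4L/7)\rceil+1$ and step sizes $\eta_i=\frac{2^{i-1}D}{G}\sqrt{\frac{7}{2L}}$, $i=1,\ldots,N$; run one OGD instance (arbitrary initial point) per $\eta_i$, with initial weights $p_{1,\eta_i}=\frac{C}{i(i+1)}$, $C=1+\frac1N$; play $\sum_i p_{t,\eta_i}\mathbf{w}_{t,\eta_i}$ and update $p_{t+1,\eta}\propto p_{t,\eta}e^{-\alpha f_t(\mathbf{w}_{t,\eta})}$ (normalized to sum to $1$) with $\alpha=\sqrt{8/L}$. Algorithm AOA: for each $J\in\mathcal{I}$ an expert $E_J$ runs Ader with input $|J|$ during rounds $t\in J$ (created at round $\min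 J$, removed after round $\max J$), producing $\mathbf{w}_{t,J}$. Active experts at round $t$: $\mathcal{A}_t=\{E_J:J\in\mathcal{I},t\in J\}$. Combination by AdaNormalHedge: $\Phi(R,C)=\exp([R]_+^2/(3C))$, $\Phi(0,0)=1$, $w(R,C)=\tfrac12(\Phi(R+1,C+1)-\Phi(R-1,C+1))$, $R_{t-1,J}=\sum_{u=\min J}^{t-1}(f_u(\mathbf{w}_u)-f_u(\mathbf{w}_{u,J}))$, $C_{t-1,J}=\sum_{u=\min J}^{t-1}|f_u(\mathbf{w}_u)-f_u(\mathbf{w}_{u,J})|$, $p_{t,J}=w(R_{t-1,J},C_{t-1,J})/\sum_{E_{J'}\in\mathcal{A}_t}w(R_{t-1,J'},C_{t-1,J'})$, and $\mathbf{w}_t=\sum_{E_J\in\mathcal{A}_t}p_{t,J}\mathbf{w}_{t,J}$. *)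

theory Defs
  imports "HOL-Analysis.Analysis"
begin

definition geo_intervals :: "nat set set" where
  "geo_intervals = {{i * 2^k .. (i+1) * 2^k - 1} | i k. i \<ge> 1}"

definition active :: "nat \<Rightarrow> nat set set" where
  "active t = {J \<in> geo_intervals. t \<in> J}"

text \<open>OGD with step eta started at round a with initial point x0; argument k is the
  offset, i.e. the point played at round a + k. Euclidean projection = closest_point.\<close>
primrec ogd :: "(nat \<Rightarrow> 'a \<Rightarrow> 'a) \<Rightarrow> 'a set \<Rightarrow> real \<Rightarrow> nat \<Rightarrow> 'a \<Rightarrow> nat \<Rightarrow> 'a::euclidean_space" where
  "ogd g \<Omega> \<eta> a x0 0 = x0"
| "ogd g \<Omega> \<eta> a x0 (Suc k) =
     closest_point \<Omega> (ogd g \<Omega> \<eta> a x0 k - \<eta> *\<^sub>R g (a + k) (ogd g \<Omega> \<eta> a x0 k))"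

definition ader_N :: "nat \<Rightarrow> nat" where
  "ader_N L = nat \<lceil>log 2 (1 + 4 * real L / 7) / 2\<rceil> + 1"

definition ader_eta :: "real \<Rightarrow> real \<Rightarrow> nat \<Rightarrow> nat \<Rightarrow> real" where
  "ader_eta D G L i = 2 ^ (i - 1) * D / G * sqrt (7 / (2 * real L))"

definition ader_alpha :: "nat \<Rightarrow> real" where
  "ader_alpha L = sqrt (8 / real L)"

definition ader_p1 :: "nat \<Rightarrow> nat \<Rightarrow> real" where
  "ader_p1 L i = (1 + 1 / real (ader_N L)) / (real i * (real i + 1))"

definition ader_expert ::
  "(nat \<Rightarrow> 'a \<Rightarrow> 'a) \<Rightarrow> 'a set \<Rightarrow> real \<Rightarrow> real \<Rightarrow> nat \<Rightarrow> nat \<Rightarrow> (nat \<Rightarrow> 'a) \<Rightarrow> nat \<Rightarrow> nat \<Rightarrow> 'a::euclidean_space" where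
  "ader_expert g \<Omega> D G L a x0 i k = ogd g \<Omega> (ader_eta D G L i) a (x0 i) k"

primrec ader_weight ::
  "(nat \<Rightarrow> 'a::euclidean_space \<Rightarrow> real) \<Rightarrow> (nat \<Rightarrow> 'a \<Rightarrow> 'a) \<Rightarrow> 'a set \<Rightarrow> real \<Rightarrow> real \<Rightarrow> nat \<Rightarrow> nat \<Rightarrow> (nat \<Rightarrow> 'a)
    \<Rightarrow> nat \<Rightarrow> nat \<Rightarrow> real" where
  "ader_weight f g \<Omega> D G L a x0 0 i = ader_p1 L i"
| "ader_weight f g \<Omega> D G L a x0 (Suc k) i =
     ader_weight f g \<Omega> D G L a x0 k i
       * exp (- ader_alpha L * f (a + k) (ader_expert g \<Omega> D G L a x0 i k))
     / (\<Sum>j = 1..ader_N L. ader_weight f g \<Omega> D G L a x0 k j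
          * exp (- ader_alpha L * f (a + k) (ader_expert g \<Omega> D G L a x0 j k)))"

definition ader_play ::
  "(nat \<Rightarrow> 'a::euclidean_space \<Rightarrow> real) \<Rightarrow> (nat \<Rightarrow> 'a \<Rightarrow> 'a) \<Rightarrow> 'a set \<Rightarrow> real \<Rightarrow> real \<Rightarrow> nat \<Rightarrow> nat \<Rightarrow> (nat \<Rightarrow> 'a)
    \<Rightarrow> nat \<Rightarrow> 'a::euclidean_space" where
  "ader_play f g \<Omega> D G L a x0 k =
     (\<Sum>i = 1..ader_N L. ader_weight f g \<Omega> D G L a x0 k i *\<^sub>R ader_expert g \<Omega> D G L a x0 i k)"

text \<open>Expert E_J: Ader with input |J| run over the rounds of J; x0 J i is the initial point
  of its i-th OGD instance. Value at round t (meaningful for t in J).\<close>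
definition expert_play ::
  "(nat \<Rightarrow> 'a \<Rightarrow> real) \<Rightarrow> (nat \<Rightarrow> 'a \<Rightarrow> 'a) \<Rightarrow> 'a set \<Rightarrow> real \<Rightarrow> real \<Rightarrow> (nat set \<Rightarrow> nat \<Rightarrow> 'a)
    \<Rightarrow> nat set \<Rightarrow> nat \<Rightarrow> 'a::euclidean_space" where
  "expert_play f g \<Omega> D G x0 J t = ader_play f g \<Omega> D G (card J) (Min J) (x0 J) (t - Min J)"

definition anh_Phi :: "real \<Rightarrow> real \<Rightarrow> real" where
  "anh_Phi R C = exp ((max R 0)\<^sup>2 / (3 * C))"   (* note anh_Phi 0 0 = exp 0 = 1 *)

definition anh_w :: "real \<Rightarrow> real \<Rightarrow> real" where
  "anh_w R C = (anh_Phi (R + 1) (C + 1) - anh_Phi (R - 1) (C + 1)) / 2"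

text \<open>Given the list hs = [w_1, ..., w_n] of AOA's previous plays, the play w_{n+1}.\<close>
definition aoa_next ::
  "(nat \<Rightarrow> 'a \<Rightarrow> real) \<Rightarrow> (nat \<Rightarrow> 'a \<Rightarrow> 'a) \<Rightarrow> 'a set \<Rightarrow> real \<Rightarrow> real \<Rightarrow> (nat set \<Rightarrow> nat \<Rightarrow> 'a)
    \<Rightarrow> 'a list \<Rightarrow> 'a::euclidean_space" where
  "aoa_next f g \<Omega> D G x0 hs =
    (let t = length hs + 1;
         w = (\<lambda>u. hs ! (u - 1));
         R = (\<lambda>J. \<Sum>u \<in> {Min J..<t}. f u (w u) - f u (expert_play f g \<Omega> D G x0 J u));
         C = (\<lambda>J. \<Sum>u \<in> {Min J..<t}. \<bar>f u (w u) - f u (expert_play f g \<Omega> D G x0 J u)\<bar>);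
         W = (\<lambda>J. anh_w (R J) (C J))
     in \<Sum>J \<in> active t. (W J / (\<Sum>J' \<in> active t. W J')) *\<^sub>R expert_play f g \<Omega> D G x0 J t)"

primrec aoa_hist ::
  "(nat \<Rightarrow> 'a \<Rightarrow> real) \<Rightarrow> (nat \<Rightarrow> 'a \<Rightarrow> 'a) \<Rightarrow> 'a set \<Rightarrow> real \<Rightarrow> real \<Rightarrow> (nat set \<Rightarrow> nat \<Rightarrow> 'a)
    \<Rightarrow> nat \<Rightarrow> 'a::euclidean_space list" where
  "aoa_hist f g \<Omega> D G x0 0 = []"
| "aoa_hist f g \<Omega> D G x0 (Suc n) = aoa_hist f g \<Omega> D G x0 n @ [aoa_next f g \<Omega> D G x0 (aoa_hist f g \<Omega> D G x0 n)]"

definition aoa ::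
  "(nat \<Rightarrow> 'a \<Rightarrow> real) \<Rightarrow> (nat \<Rightarrow> 'a \<Rightarrow> 'a) \<Rightarrow> 'a set \<Rightarrow> real \<Rightarrow> real \<Rightarrow> (nat set \<Rightarrow> nat \<Rightarrow> 'a)
    \<Rightarrow> nat \<Rightarrow> 'a::euclidean_space" where
  "aoa f g \<Omega> D G x0 t = aoa_hist f g \<Omega> D G x0 t ! (t - 1)"

definition c_prime :: "nat \<Rightarrow> real" where
  "c_prime s = 1 + ln (real s) + ln (1 + log 2 (real s)) + ln ((5 + 3 * ln (1 + real s)) / 2)"

definition path_length :: "(nat \<Rightarrow> 'a::real_normed_vector) \<Rightarrow> nat \<Rightarrow> nat \<Rightarrow> real" where
  "path_length u r s = (\<Sum>t = r..s. norm (u (t + 1) - u t))"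

definition k_I :: "real \<Rightarrow> real \<Rightarrow> int" where
  "k_I P D = \<lfloor>log 2 (1 + 4 * P / (7 * D)) / 2\<rfloor> + 1"

end

theory Submission
  imports Defs
begin

(*
  On each geometric covering interval J the regret of AOA splits into the meta-regret of
  AdaNormalHedge against the expert E_J and the dynamic regret of E_J itself.  The meta-regret is
  controlled by the AdaNormalHedge potential: since the weighted instantaneous regrets are
  nonpositive (Jensen), the sum of the potentials exp([R]_+^2 / 3C) of all experts started so far
  stays below their budgets, which gives R <= sqrt (3 |J| ln (#experts * budget)).  The expert
  regret is that of Ader: Hedge over the grid of OGD step sizes costs O(sqrt |J| ln k_I), and the
  grid point with index k_I is within a factor 2 of the optimal step size for the path length.
  Finally, [r, s] splits at a suitable point c into two runs of geometric covering intervals whose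
  lengths decrease geometrically away from c; summing the per-interval bounds with Cauchy-Schwarz
  only loses a constant factor.
*)

section \<open>The AdaNormalHedge potential\<close>

lemma tangent_le_pos_part_sq_div:
  fixes x y l :: real
  assumes "0 \<le> y" "0 \<le> l" "y = 0 \<Longrightarrow> x \<le> 0"
  shows "2*l*x - l^2*y \<le> (max x 0)^2 / y"
proof (cases "y = 0")
  case True
  then show ?thesis using assms by (simp add: mult_nonneg_nonpos)
next
  case False
  then have y: "y > 0" using assms by simp
  define m where "m = max x 0"
  have "(max x 0)^2/y - (2*l*x - l^2*y) = (m - l*y)^2/y + 2*l*(m - x)"
    using y unfolding m_def by (simp add: field_simps power2_eq_square)
  moreover have "(m - l*y)^2/y \<ge> 0" using y by simp
  moreover have "2*l*(m - x) \<ge> 0" using assms(2) unfolding m_def by simp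
  ultimately show ?thesis by linarith
qed

text \<open>The perspective function \<open>(max x 0)\<^sup>2 / y\<close> is the supremum of the linear functions
  \<open>2 l x - l\<^sup>2 y\<close>, \<open>l \<ge> 0\<close>, hence jointly convex; so is its composition with \<open>exp\<close>.\<close>

lemma anh_Phi_convex_comb:
  fixes x0 y0 x1 y1 \<rho> :: real
  assumes "0 \<le> \<rho>" "\<rho> \<le> 1" "0 \<le> y0" "0 < y1" "y0 = 0 \<Longrightarrow> x0 \<le> 0"
  shows "anh_Phi ((1-\<rho>)*x0 + \<rho>*x1) ((1-\<rho>)*y0 + \<rho>*y1) \<le> (1-\<rho>)*anh_Phi x0 y0 + \<rho>*anh_Phi x1 y1"
proof (cases "\<rho> = 0")
  case True
  then show ?thesis by simp
next
  case False
  define x where "x = (1-\<rho>)*x0 + \<rho>*x1"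
  define y where "y = (1-\<rho>)*y0 + \<rho>*y1"
  define q0 where "q0 = (max x0 0)^2/y0/3"
  define q1 where "q1 = (max x1 0)^2/y1/3"
  have y: "y > 0" unfolding y_def using assms False
    by (smt (verit) mult_nonneg_nonneg mult_pos_pos)
  define l where "l = max x 0 / y"
  have l: "l \<ge> 0" unfolding l_def using y by simp
  have "(max x 0)^2 / y = 2*l*x - l^2*y"
    unfolding l_def using y by (cases "x \<ge> 0") (auto simp: field_simps power2_eq_square)
  also have "\<dots> = (1-\<rho>)*(2*l*x0 - l^2*y0) + \<rho>*(2*l*x1 - l^2*y1)"
    unfolding x_def y_def by (simp add: algebra_simps)
  also have "\<dots> \<le> (1-\<rho>)*(3*q0) + \<rho>*(3*q1)"
    unfolding q0_def q1_def
    using assms tangent_le_pos_part_sq_div[of y0 l x0] tangent_le_pos_part_sq_div[of y1 l x1] l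
    by (intro add_mono mult_left_mono) auto
  finally have le: "(max x 0)^2 / y / 3 \<le> (1-\<rho>)*q0 + \<rho>*q1" by simp
  have "anh_Phi x y = exp ((max x 0)^2 / y / 3)" unfolding anh_Phi_def by (simp add: field_simps)
  also have "\<dots> \<le> exp ((1-\<rho>)*q0 + \<rho>*q1)" using le by simp
  also have "\<dots> \<le> (1-\<rho>)*exp q0 + \<rho>*exp q1"
    using convex_onD[OF exp_convex, of \<rho> q0 q1] assms by simp
  also have "\<dots> = (1-\<rho>)*anh_Phi x0 y0 + \<rho>*anh_Phi x1 y1"
    unfolding anh_Phi_def q0_def q1_def by (simp add: field_simps)
  finally show ?thesis unfolding x_def y_def .
qed

lemma exp_le_inverse_one_minus:
  fixes a :: real
  assumes "a < 1"
  shows "exp a \<le> 1/(1-a)"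
proof -
  have "(1-a) * exp a \<le> 1"
    using exp_minus_ge[of a] assms by (simp add: exp_minus field_simps)
  then show ?thesis using assms by (simp add: field_simps)
qed

lemma exp_minus_one_le:
  fixes a :: real
  assumes "0 \<le> a" "a \<le> 1/3"
  shows "exp a - 1 \<le> 3/2 * a"
proof -
  have "1/(1-a) - 1 = a/(1-a)" using assms by (simp add: field_simps)
  also have "\<dots> \<le> a/(2/3)" using assms by (intro divide_left_mono) auto
  finally have "1/(1-a) - 1 \<le> 3/2 * a" by simp
  then show ?thesis using exp_le_inverse_one_minus[of a] assms by linarith
qed

lemma exp_9_7_le_4: "exp (9/7::real) \<le> 4"
proof -
  have "exp (9/7::real) = exp 1 * exp (2/7)" by (simp flip: exp_add)
  also have "\<dots> \<le> (272/100) * (1/(1-2/7))"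
    using e_less_272 exp_le_inverse_one_minus[of "2/7"] by (intro mult_mono) auto
  also have "\<dots> \<le> 4" by simp
  finally show ?thesis .
qed

lemma exp_plus_exp_minus_le:
  fixes u :: real
  assumes "0 \<le> u" "u \<le> 2/3"
  shows "exp u + exp (-u) \<le> 2 + (10/9)*u^2"
proof -
  obtain t1 where t1: "\<bar>t1\<bar> \<le> \<bar>u\<bar>" "exp u = (\<Sum>m<4. u^m / fact m) + (exp t1 / fact 4) * u^4"
    using Maclaurin_exp_le[of u 4] by blast
  obtain t2 where t2: "\<bar>t2\<bar> \<le> \<bar>-u\<bar>" "exp (-u) = (\<Sum>m<4. (-u)^m / fact m) + (exp t2 / fact 4) * (-u)^4"
    using Maclaurin_exp_le[of "-u" 4] by blast
  have "exp t1 \<le> exp 1" "exp t2 \<le> exp 1" using t1(1) t2(1) assms by auto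
  then have e: "exp t1 + exp t2 \<le> 6" using e_less_272 by linarith
  have "exp u + exp (-u) = 2 + u^2 + (exp t1 + exp t2) / 24 * u^4"
    using t1(2) t2(2) by (simp add: numeral_eq_Suc fact_numeral field_simps)
  also have "\<dots> \<le> 2 + u^2 + 6/24 * u^4"
    using e by (intro add_left_mono mult_right_mono) auto
  also have "\<dots> \<le> 2 + (10/9)*u^2"
  proof -
    have "u^2 \<le> (2/3)^2" using assms by (intro power_mono) auto
    then have "u^2 * u^2 \<le> (4/9) * u^2" by (intro mult_right_mono) (auto simp: power2_eq_square)
    then show ?thesis by (simp add: power2_eq_square power4_eq_xxxx)
  qed
  finally show ?thesis .
qed

lemma exp_average_le:
  fixes y u :: real
  assumes "0 \<le> u" "u \<le> 2/3"
  shows "(exp (y+u) + exp (y-u))/2 \<le> exp (y + (5/9)*u^2)"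
proof -
  have "exp (y+u) + exp (y-u) = exp y * (exp u + exp (-u))"
    by (simp add: exp_add exp_diff exp_minus field_simps)
  also have "\<dots> \<le> exp y * (2 + (10/9)*u^2)"
    using exp_plus_exp_minus_le[OF assms] by simp
  also have "\<dots> \<le> exp y * (2 * exp ((5/9)*u^2))"
  proof -
    have "1 + (5/9)*u^2 \<le> exp ((5/9)*u^2)" by (rule exp_ge_add_one_self)
    then have "2 + (10/9)*u^2 \<le> 2 * exp ((5/9)*u^2)" by linarith
    then show ?thesis by (rule mult_left_mono) simp
  qed
  finally show ?thesis by (simp add: exp_add)
qed

lemma anh_Phi_average_le:
  fixes R C :: real
  assumes R: "0 < R" and RC: "R \<le> C"
  defines "a \<equiv> 1/(3*(C+1))" and "b \<equiv> R^2/(3*C*(C+1))"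
  shows "(anh_Phi (R+1) (C+1) + anh_Phi (R-1) (C+1))/2 \<le> anh_Phi R C * exp (a - (7/27)*b)"
proof -
  define u where "u = 2*a*R"
  define Y where "Y = (R^2 + 1)/(3*(C+1))"
  have C: "C > 0" using R RC by simp
  have u: "0 \<le> u" "u \<le> 2/3" unfolding u_def a_def using R RC C by (auto simp: field_simps)
  have plus: "anh_Phi (R+1) (C+1) = exp (Y + u)"
    unfolding anh_Phi_def Y_def u_def a_def using R
    by (simp add: max_def add_divide_distrib[symmetric] power2_eq_square algebra_simps)
  have minus: "anh_Phi (R-1) (C+1) \<le> exp (Y - u)"
  proof -
    have "(max (R-1) 0)^2 \<le> (R-1)^2" by (cases "R - 1 \<ge> 0") (auto simp: max_def)
    then have "(max (R-1) 0)^2/(3*(C+1)) \<le> (R-1)^2/(3*(C+1))"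
      using C by (intro divide_right_mono) auto
    also have "(R-1)^2/(3*(C+1)) = Y - u" unfolding Y_def u_def a_def
      by (simp add: diff_divide_distrib[symmetric] power2_eq_square algebra_simps)
    finally show ?thesis unfolding anh_Phi_def by simp
  qed
  have "(5/9)*u^2 = (20/81) * R^2 / (C+1)^2"
    unfolding u_def a_def using C by (simp add: field_simps power2_eq_square)
  also have "\<dots> \<le> (20/81) * R^2 / (C*(C+1))"
    using C by (intro divide_left_mono) (auto simp: power2_eq_square)
  also have "\<dots> = (20/27)*b" unfolding b_def using C by simp
  finally have "(5/9)*u^2 \<le> (20/27)*b" .
  moreover have "Y = R^2/(3*C) - b + a" unfolding Y_def a_def b_def using C
    by (simp add: divide_simps) (simp add: algebra_simps power2_eq_square)
  ultimately have "Y + (5/9)*u^2 \<le> R^2/(3*C) + (a - (7/27)*b)" by simp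
  then have "exp (Y + (5/9)*u^2) \<le> anh_Phi R C * exp (a - (7/27)*b)"
    unfolding anh_Phi_def using R by (simp add: max_def flip: exp_add)
  moreover have "(anh_Phi (R+1) (C+1) + anh_Phi (R-1) (C+1))/2 \<le> (exp (Y+u) + exp (Y-u))/2"
    using plus minus by simp
  moreover have "(exp (Y+u) + exp (Y-u))/2 \<le> exp (Y + (5/9)*u^2)" by (rule exp_average_le[OF u])
  ultimately show ?thesis by linarith
qed

lemma anh_second_difference_pos_le:
  fixes R C :: real
  assumes R: "0 < R" and RC: "R \<le> C"
  shows "(anh_Phi (R+1) (C+1) + anh_Phi (R-1) (C+1))/2 - anh_Phi R C \<le> 2/(C+1)"
proof -
  define a where "a = 1/(3*(C+1))"
  define b where "b = R^2/(3*C*(C+1))"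
  have C: "C > 0" using R RC by simp
  have a: "0 < a" "a \<le> 1/3" "6*a = 2/(C+1)" unfolding a_def using C by (auto simp: field_simps)
  have b: "0 \<le> b" unfolding b_def using C by simp
  have avg: "(anh_Phi (R+1) (C+1) + anh_Phi (R-1) (C+1))/2 \<le> anh_Phi R C * exp (a - (7/27)*b)"
    unfolding a_def b_def using anh_Phi_average_le R RC by simp
  text \<open>Either the drift \<open>-(7/27) b\<close> beats \<open>a\<close>, or \<open>b\<close> is so small that
    \<open>anh_Phi R C = exp (b (C+1)) \<le> exp (9/7) \<le> 4\<close>.\<close>
  show ?thesis
  proof (cases "(7/27)*b \<ge> a")
    case True
    then have "anh_Phi R C * exp (a - (7/27)*b) \<le> anh_Phi R C"
      unfolding anh_Phi_def by simp
    then show ?thesis using avg a by linarith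
  next
    case False
    have "R^2/(3*C) = b*(C+1)" unfolding b_def using C by simp
    also have "\<dots> \<le> (27/7)*a*(C+1)" using False C by (intro mult_right_mono) auto
    also have "\<dots> = 9/7" unfolding a_def using C by (simp add: field_simps)
    finally have "anh_Phi R C \<le> exp (9/7)" unfolding anh_Phi_def using R by (simp add: max_def)
    then have Phi: "anh_Phi R C \<le> 4" using exp_9_7_le_4 by linarith
    have "exp (a - (7/27)*b) - 1 \<le> exp a - 1" using b by simp
    also have "\<dots> \<le> 3/2*a" using exp_minus_one_le a by simp
    finally have "anh_Phi R C * (exp (a - (7/27)*b) - 1) \<le> anh_Phi R C * (3/2*a)"
      by (rule mult_left_mono) (simp add: anh_Phi_def)
    also have "\<dots> \<le> 4 * (3/2*a)" using Phi a by (intro mult_right_mono) auto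
    finally show ?thesis using avg a by (simp add: algebra_simps)
  qed
qed

lemma anh_second_difference_le:
  fixes R C :: real
  assumes C: "0 \<le> C" and RC: "\<bar>R\<bar> \<le> C"
  shows "(anh_Phi (R+1) (C+1) + anh_Phi (R-1) (C+1))/2 - anh_Phi R C \<le> 2/(C+1)"
proof (cases "R \<le> 0")
  case True
  define a where "a = 1/(3*(C+1))"
  have a: "0 < a" "a \<le> 1/3" "6*a = 2/(C+1)" unfolding a_def using C by (auto simp: field_simps)
  have "(max (R+1) 0)^2 \<le> 1" using True RC by (intro power_le_one) auto
  then have "anh_Phi (R+1) (C+1) \<le> exp a"
    unfolding anh_Phi_def a_def using C by (simp add: divide_right_mono)
  moreover have "anh_Phi R C = 1" "anh_Phi (R-1) (C+1) = 1"
    using True by (simp_all add: anh_Phi_def)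
  ultimately show ?thesis using exp_minus_one_le[of a] a by simp
next
  case False
  then show ?thesis using anh_second_difference_pos_le RC by simp
qed

lemma anh_Phi_increment_le:
  fixes R C r :: real
  assumes C: "0 \<le> C" and RC: "\<bar>R\<bar> \<le> C" and r: "\<bar>r\<bar> \<le> 1"
  shows "anh_Phi (R+r) (C+\<bar>r\<bar>) \<le> anh_Phi R C + anh_w R C * r + 2*\<bar>r\<bar>/(C+1)"
proof -
  have second: "(anh_Phi (R+1) (C+1) + anh_Phi (R-1) (C+1))/2 - anh_Phi R C \<le> 2/(C+1)"
    by (rule anh_second_difference_le[OF C RC])
  have C0: "C = 0 \<Longrightarrow> R \<le> 0" using RC by simp
  show ?thesis
  proof (cases "r \<ge> 0")
    case True
    have "anh_Phi (R+r) (C+\<bar>r\<bar>) = anh_Phi ((1-r)*R + r*(R+1)) ((1-r)*C + r*(C+1))"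
      using True by (simp add: algebra_simps)
    also have "\<dots> \<le> (1-r)*anh_Phi R C + r*anh_Phi (R+1) (C+1)"
      using True r C C0 by (intro anh_Phi_convex_comb) auto
    also have "\<dots> = anh_Phi R C + r*(anh_Phi (R+1) (C+1) - anh_Phi R C)"
      by (simp add: algebra_simps)
    also have "\<dots> \<le> anh_Phi R C + r*(anh_w R C + 2/(C+1))"
    proof -
      have "anh_Phi (R+1) (C+1) - anh_Phi R C \<le> anh_w R C + 2/(C+1)"
        using second unfolding anh_w_def by argo
      then show ?thesis using True by (intro add_left_mono mult_left_mono) auto
    qed
    finally show ?thesis using True by (simp add: algebra_simps)
  next
    case False
    define q where "q = -r"
    have q: "0 \<le> q" "q \<le> 1" "r = -q" using False r unfolding q_def by auto
    have "anh_Phi (R+r) (C+\<bar>r\<bar>) = anh_Phi ((1-q)*R + q*(R-1)) ((1-q)*C + q*(C+1))"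
      using q by (simp add: algebra_simps)
    also have "\<dots> \<le> (1-q)*anh_Phi R C + q*anh_Phi (R-1) (C+1)"
      using q C C0 by (intro anh_Phi_convex_comb) auto
    also have "\<dots> = anh_Phi R C + q*(anh_Phi (R-1) (C+1) - anh_Phi R C)"
      by (simp add: algebra_simps)
    also have "\<dots> \<le> anh_Phi R C + q*(- anh_w R C + 2/(C+1))"
    proof -
      have "anh_Phi (R-1) (C+1) - anh_Phi R C \<le> - anh_w R C + 2/(C+1)"
        using second unfolding anh_w_def by argo
      then show ?thesis using q by (intro add_left_mono mult_left_mono) auto
    qed
    finally show ?thesis using q by (simp add: algebra_simps)
  qed
qed

lemma anh_w_nonneg:
  assumes "0 \<le> C"
  shows "0 \<le> anh_w R C"
proof -
  have "(max (R-1) 0)^2 \<le> (max (R+1) 0)^2" by (intro power_mono) auto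
  then have "(max (R-1) 0)^2/(3*(C+1)) \<le> (max (R+1) 0)^2/(3*(C+1))"
    using assms by (intro divide_right_mono) auto
  then show ?thesis unfolding anh_w_def anh_Phi_def by simp
qed

section \<open>Online gradient descent\<close>

lemma convex_on_above_tangent_within:
  fixes F :: "'a::real_normed_vector \<Rightarrow> real"
  assumes S: "convex S" and F: "convex_on S F"
    and der: "(F has_derivative F') (at x within S)"
    and x: "x \<in> S" and v: "v \<in> S"
  shows "F x + F' (v - x) \<le> F v"
proof -
  define \<gamma> where "\<gamma> = (\<lambda>t::real. x + t *\<^sub>R (v - x))"
  have \<gamma>0: "\<gamma> 0 = x" unfolding \<gamma>_def by simp
  have \<gamma>S: "\<gamma> ` {0..1} \<subseteq> S"
  proof
    fix y assume "y \<in> \<gamma> ` {0..1}"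
    then obtain t where t: "t \<in> {0..1}" "y = \<gamma> t" by auto
    have "y = (1 - t) *\<^sub>R x + t *\<^sub>R v" unfolding t \<gamma>_def by (simp add: algebra_simps)
    then show "y \<in> S" using S x v t by (simp add: convexD_alt)
  qed
  have lin: "linear F'" using der by (rule has_derivative_linear)
  have "(\<gamma> has_derivative (\<lambda>t. t *\<^sub>R (v - x))) (at 0 within {0..1})"
    unfolding \<gamma>_def by (auto intro!: derivative_eq_intros)
  moreover have "(F has_derivative F') (at (\<gamma> 0) within (\<gamma> ` {0..1}))"
    using has_derivative_subset[OF der \<gamma>S] \<gamma>0 by simp
  ultimately have "((\<lambda>t. F (\<gamma> t)) has_derivative (\<lambda>t. F' (t *\<^sub>R (v - x)))) (at 0 within {0..1})"
    by (rule has_derivative_in_compose)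
  then have "((\<lambda>t. F (\<gamma> t)) has_derivative (\<lambda>t. F' (v - x) * t)) (at 0 within {0..1})"
    by (rule has_derivative_eq_rhs) (auto simp: fun_eq_iff linear_cmul[OF lin])
  then have "((\<lambda>t. F (\<gamma> t)) has_field_derivative F' (v - x)) (at 0 within {0..1})"
    unfolding has_field_derivative_def by simp
  then have lim: "((\<lambda>t. (F (\<gamma> t) - F (\<gamma> 0)) / (t - 0)) \<longlongrightarrow> F' (v - x)) (at 0 within {0..1})"
    by (simp add: has_field_derivative_iff)
  have "eventually (\<lambda>t. (F (\<gamma> t) - F (\<gamma> 0)) / (t - 0) \<le> F v - F x) (at 0 within {0..1::real})"
    unfolding eventually_at_filter
  proof (rule always_eventually, intro allI impI)
    fix t :: real assume t: "t \<noteq> 0" "t \<in> {0..1}"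
    have "F (\<gamma> t) = F ((1 - t) *\<^sub>R x + t *\<^sub>R v)" unfolding \<gamma>_def by (simp add: algebra_simps)
    also have "\<dots> \<le> (1 - t) * F x + t * F v" using convex_onD[OF F, of t x v] t x v by auto
    finally show "(F (\<gamma> t) - F (\<gamma> 0)) / (t - 0) \<le> F v - F x"
      using t \<gamma>0 by (simp add: field_simps)
  qed
  moreover have "\<not> trivial_limit (at (0::real) within {0..1})"
    by (simp add: at_within_Icc_at_right)
  ultimately have "F' (v - x) \<le> F v - F x" using lim by (intro tendsto_upperbound)
  then show ?thesis by simp
qed

lemma norm_closest_point_diff_le:
  fixes S :: "'a::euclidean_space set"
  assumes "convex S" "closed S" "z \<in> S"
  shows "norm (closest_point S y - z) \<le> norm (y - z)"
proof -
  have "dist (closest_point S y) (closest_point S z) \<le> dist y z"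
    using assms by (intro closest_point_lipschitz) auto
  then show ?thesis using closest_point_self[OF assms(3)] by (simp add: dist_norm)
qed

lemma power2_norm_diff_scaleR:
  fixes w v :: "'a::real_inner"
  shows "(norm (w - c *\<^sub>R v))^2 = (norm w)^2 - 2*c*(v \<bullet> w) + c^2 * (norm v)^2"
  unfolding power2_norm_eq_inner
  by (simp add: inner_diff_left inner_diff_right inner_commute algebra_simps power2_eq_square)

lemma power2_norm_diff_change_le:
  fixes p z z' :: "'a::real_normed_vector"
  assumes "norm (p - z') \<le> D" "norm (p - z) \<le> D"
  shows "(norm (p - z'))^2 - (norm (p - z))^2 \<le> 2*D*norm (z' - z)"
proof -
  define A where "A = norm (p - z')"
  define B where "B = norm (p - z)"
  have "A - B \<le> norm (z' - z)"
    unfolding A_def B_def using norm_triangle_ineq3[of "p - z'" "p - z"] by (simp add: norm_minus_commute)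
  moreover have "0 \<le> A + B" "A + B \<le> 2*D" using assms unfolding A_def B_def by auto
  ultimately have "(A - B)*(A + B) \<le> norm (z' - z) * (2*D)"
    by (intro mult_mono) auto
  then show ?thesis unfolding A_def B_def by (simp add: power2_eq_square algebra_simps)
qed

lemma ogd_in:
  assumes "closed S" "x0 \<in> S"
  shows "ogd g S \<eta> a x0 k \<in> S"
  using assms closest_point_in_set[of S] by (cases k) auto

locale oco =
  fixes \<Omega> :: "'a::euclidean_space set"
    and f :: "nat \<Rightarrow> 'a \<Rightarrow> real" and g :: "nat \<Rightarrow> 'a \<Rightarrow> 'a"
    and D G :: real
    and x0 :: "nat set \<Rightarrow> nat \<Rightarrow> 'a"
  assumes convex_dom: "convex \<Omega>" and closed_dom: "closed \<Omega>"
    and zero_in_dom: "0 \<in> \<Omega>" and diameter: "\<forall>x\<in>\<Omega>. \<forall>y\<in>\<Omega>. norm (x - y) \<le> D"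
    and D_pos: "D > 0" and G_pos: "G > 0"
    and convex_loss: "\<forall>t\<ge>1. convex_on \<Omega> (f t)"
    and gradient: "\<forall>t\<ge>1. \<forall>w\<in>\<Omega>. (f t has_derivative (\<lambda>h. g t w \<bullet> h)) (at w within \<Omega>)"
    and gradient_bound: "\<forall>t\<ge>1. \<forall>w\<in>\<Omega>. norm (g t w) \<le> G"
    and loss_range: "\<forall>t\<ge>1. \<forall>w\<in>\<Omega>. 0 \<le> f t w \<and> f t w \<le> 1"
    and init_in_dom: "\<forall>J\<in>geo_intervals. \<forall>i\<ge>1. x0 J i \<in> \<Omega>"
begin

lemma ogd_step_regret:
  assumes t: "t \<ge> 1" and \<eta>: "\<eta> > 0" and y: "y \<in> \<Omega>" and z: "z \<in> \<Omega>" and z': "z' \<in> \<Omega>"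
  defines "y' \<equiv> closest_point \<Omega> (y - \<eta> *\<^sub>R g t y)"
  shows "f t y - f t z \<le> ((norm (y - z))^2 - (norm (y' - z'))^2 + 2*D*norm (z' - z))/(2*\<eta>) + \<eta>*G^2/2"
proof -
  have y': "y' \<in> \<Omega>" unfolding y'_def using closest_point_in_set[OF closed_dom] zero_in_dom by auto
  have "f t y + g t y \<bullet> (z - y) \<le> f t z"
    using convex_on_above_tangent_within[OF convex_dom _ _ y z] convex_loss gradient t y by auto
  then have "f t y - f t z \<le> g t y \<bullet> (y - z)" by (simp add: inner_diff_right)
  then have tangent: "2*\<eta>*(f t y - f t z) \<le> 2*\<eta>*(g t y \<bullet> (y - z))"
    using \<eta> by simp
  have "(norm (y' - z))^2 \<le> (norm (y - \<eta> *\<^sub>R g t y - z))^2"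
    unfolding y'_def using norm_closest_point_diff_le[OF convex_dom closed_dom z] by (intro power_mono) auto
  also have "y - \<eta> *\<^sub>R g t y - z = (y - z) - \<eta> *\<^sub>R g t y" by (simp add: algebra_simps)
  also have "(norm \<dots>)^2 = (norm (y - z))^2 - 2*\<eta>*(g t y \<bullet> (y - z)) + \<eta>^2*(norm (g t y))^2"
    by (rule power2_norm_diff_scaleR)
  finally have descent: "2*\<eta>*(g t y \<bullet> (y - z)) \<le> (norm (y - z))^2 - (norm (y' - z))^2 + \<eta>^2*(norm (g t y))^2"
    by simp
  have "\<eta>^2*(norm (g t y))^2 \<le> \<eta>^2*G^2"
    using gradient_bound t y by (intro mult_left_mono power_mono) auto
  moreover have "(norm (y' - z'))^2 - (norm (y' - z))^2 \<le> 2*D*norm (z' - z)"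
    using diameter y' z z' by (intro power2_norm_diff_change_le) auto
  ultimately have "2*\<eta>*(f t y - f t z) \<le> (norm (y - z))^2 - (norm (y' - z'))^2 + 2*D*norm (z' - z) + \<eta>^2*G^2"
    using tangent descent by linarith
  then show ?thesis using \<eta> by (simp add: field_simps power2_eq_square)
qed

lemma ogd_dynamic_regret:
  assumes a: "a \<ge> 1" and \<eta>: "\<eta> > 0" and y0: "y0 \<in> \<Omega>" and u: "\<forall>k\<le>L. u (a+k) \<in> \<Omega>"
  shows "(\<Sum>k<L. f (a+k) (ogd g \<Omega> \<eta> a y0 k) - f (a+k) (u (a+k)))
     \<le> (D^2 + 2*D*(\<Sum>k<L. norm (u (a+k+1) - u (a+k))))/(2*\<eta>) + \<eta>*G^2*L/2"
proof -
  define x where "x = ogd g \<Omega> \<eta> a y0"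
  have x: "x k \<in> \<Omega>" for k unfolding x_def using ogd_in[OF closed_dom y0] .
  define \<phi> where "\<phi> = (\<lambda>k. (norm (x k - u (a+k)))^2)"
  have step: "f (a+k) (x k) - f (a+k) (u (a+k))
      \<le> (\<phi> k - \<phi> (Suc k) + 2*D*norm (u (a+k+1) - u (a+k)))/(2*\<eta>) + \<eta>*G^2/2"
    if "k < L" for k
  proof -
    have "x (Suc k) = closest_point \<Omega> (x k - \<eta> *\<^sub>R g (a+k) (x k))" unfolding x_def by simp
    moreover have "u (a + (k+1)) \<in> \<Omega>" using u[rule_format, of "k+1"] that by linarith
    ultimately show ?thesis unfolding \<phi>_def
      using ogd_step_regret[of "a+k" \<eta> "x k" "u (a+k)" "u (a+k+1)"] a \<eta> x u that
      by (auto simp: add.assoc)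
  qed
  have "(\<Sum>k<L. f (a+k) (x k) - f (a+k) (u (a+k)))
      \<le> (\<Sum>k<L. (\<phi> k - \<phi> (Suc k) + 2*D*norm (u (a+k+1) - u (a+k)))/(2*\<eta>) + \<eta>*G^2/2)"
    using step by (intro sum_mono) auto
  also have "\<dots> = ((\<Sum>k<L. \<phi> k - \<phi> (Suc k)) + 2*D*(\<Sum>k<L. norm (u (a+k+1) - u (a+k))))/(2*\<eta>) + \<eta>*G^2*L/2"
    by (simp add: sum.distrib sum_divide_distrib[symmetric] sum_distrib_left)
  also have "(\<Sum>k<L. \<phi> k - \<phi> (Suc k)) = \<phi> 0 - \<phi> L"
    by (rule sum_lessThan_telescope')
  also have "\<phi> 0 - \<phi> L \<le> D^2"
  proof -
    have "norm (x 0 - u a) \<le> D" using diameter x u by auto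
    then have "\<phi> 0 \<le> D^2" unfolding \<phi>_def by (intro power_mono) auto
    moreover have "\<phi> L \<ge> 0" unfolding \<phi>_def by simp
    ultimately show ?thesis by linarith
  qed
  finally show ?thesis using \<eta> unfolding x_def by (simp add: divide_right_mono)
qed

end

section \<open>Ader: exponential weights over a grid of step sizes\<close>

lemma sum_inverse_consecutive_products:
  "(\<Sum>i=1..n. 1/(real i * (real i + 1))) = real n / (real n + 1)"
proof (induction n)
  case 0
  then show ?case by simp
next
  case (Suc n)
  have "real n + 1 \<noteq> 0" "real n + 2 \<noteq> 0" by linarith+
  then have "real n/(real n + 1) + 1/((real n + 1)*(real n + 2)) = (real n + 1)/(real n + 2)"
    by (simp add: divide_simps) (simp add: algebra_simps power2_eq_square)
  then show ?case using Suc by (simp add: add.commute)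
qed

lemma ader_N_ge_1: "1 \<le> ader_N L"
  unfolding ader_N_def by simp

lemma sum_ader_p1: "(\<Sum>i=1..ader_N L. ader_p1 L i) = 1"
proof -
  define N where "N = ader_N L"
  have "real N > 0" using ader_N_ge_1[of L] unfolding N_def by simp
  then have N: "real N \<noteq> 0" "real N + 1 \<noteq> 0" by linarith+
  have "(\<Sum>i=1..N. ader_p1 L i) = (1 + 1/real N) * (\<Sum>i=1..N. 1/(real i * (real i + 1)))"
    unfolding ader_p1_def N_def by (simp add: sum_distrib_left)
  also have "\<dots> = (1 + 1/real N) * (real N / (real N + 1))"
    by (simp only: sum_inverse_consecutive_products)
  also have "\<dots> = 1" using N by (simp add: divide_simps)
  finally show ?thesis unfolding N_def .
qed

lemma ader_p1_pos: "1 \<le> i \<Longrightarrow> 0 < ader_p1 L i"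
  unfolding ader_p1_def by (intro divide_pos_pos add_pos_nonneg mult_pos_pos) auto

lemma ader_p1_ge:
  assumes "1 \<le> i"
  shows "1/(real i + 1)^2 \<le> ader_p1 L i"
proof -
  have "1/(real i + 1)^2 \<le> 1/(real i * (real i + 1))"
    using assms by (intro divide_left_mono) (auto simp: power2_eq_square)
  also have "\<dots> \<le> ader_p1 L i" unfolding ader_p1_def by (intro divide_right_mono) auto
  finally show ?thesis .
qed

lemma exp_minus_le_quadratic:
  fixes x :: real
  assumes "0 \<le> x"
  shows "exp (-x) \<le> 1 - x + x^2/2"
proof -
  have pos: "1 + x + x^2/2 > 0" using assms by (simp add: add_pos_nonneg)
  have "1 \<le> 1 + x^4/4" by simp
  also have "1 + x^4/4 = (1 - x + x^2/2) * (1 + x + x^2/2)"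
    by (simp add: algebra_simps power2_eq_square power4_eq_xxxx)
  finally have "1/(1 + x + x^2/2) \<le> 1 - x + x^2/2" using pos by (simp add: field_simps)
  moreover have "exp (-x) \<le> 1/(1 + x + x^2/2)"
    using exp_lower_Taylor_quadratic[OF assms] pos by (simp add: exp_minus field_simps)
  ultimately show ?thesis by linarith
qed

lemma ln_sum_weighted_exp_le:
  fixes w loss :: "'i \<Rightarrow> real"
  assumes I: "finite I" and w: "\<forall>i\<in>I. 0 \<le> w i" "sum w I = 1"
    and loss: "\<forall>i\<in>I. 0 \<le> loss i \<and> loss i \<le> 1" and \<alpha>: "0 < \<alpha>"
  shows "ln (\<Sum>i\<in>I. w i * exp (- \<alpha> * loss i)) \<le> - \<alpha> * (\<Sum>i\<in>I. w i * loss i) + \<alpha>^2/2"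
proof -
  define Z where "Z = (\<Sum>i\<in>I. w i * exp (- \<alpha> * loss i))"
  have "exp (- \<alpha>) = (\<Sum>i\<in>I. w i * exp (- \<alpha>))" using w by (simp flip: sum_distrib_right)
  also have "\<dots> \<le> Z" unfolding Z_def using w loss \<alpha> by (intro sum_mono mult_left_mono) auto
  finally have Z: "0 < Z" by (rule less_le_trans[OF exp_gt_zero])
  have "Z \<le> (\<Sum>i\<in>I. w i * (1 - \<alpha> * loss i + \<alpha>^2/2))"
    unfolding Z_def
  proof (intro sum_mono mult_left_mono)
    fix i assume i: "i \<in> I"
    have "exp (- (\<alpha> * loss i)) \<le> 1 - \<alpha> * loss i + (\<alpha> * loss i)^2/2"
      using loss i \<alpha> by (intro exp_minus_le_quadratic) auto
    also have "(\<alpha> * loss i)^2 \<le> \<alpha>^2"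
      using loss i \<alpha> by (simp add: power_mult_distrib power_le_one mult_le_cancel_left1)
    finally show "exp (- \<alpha> * loss i) \<le> 1 - \<alpha> * loss i + \<alpha>^2/2" by simp
    show "0 \<le> w i" using w i by simp
  qed
  also have "\<dots> = sum w I * (1 + \<alpha>^2/2) - \<alpha> * (\<Sum>i\<in>I. w i * loss i)"
    by (simp add: algebra_simps sum.distrib sum_distrib_left sum_distrib_right sum_subtractf)
  finally show ?thesis using ln_le_minus_one[OF Z] w unfolding Z_def by simp
qed

context oco
begin

lemma ader_expert_in:
  "\<forall>i\<ge>1. y0 i \<in> \<Omega> \<Longrightarrow> 1 \<le> i \<Longrightarrow> ader_expert g \<Omega> D G L a y0 i k \<in> \<Omega>"
  unfolding ader_expert_def using ogd_in[OF closed_dom] by auto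

lemma ader_weight_simplex:
  "(\<forall>i\<in>{1..ader_N L}. 0 < ader_weight f g \<Omega> D G L a y0 k i)
     \<and> (\<Sum>i=1..ader_N L. ader_weight f g \<Omega> D G L a y0 k i) = 1"
proof (induction k)
  case 0
  then show ?case using sum_ader_p1 ader_p1_pos by auto
next
  case (Suc k)
  define w where "w = ader_weight f g \<Omega> D G L a y0 k"
  define e where "e = (\<lambda>i. exp (- ader_alpha L * f (a + k) (ader_expert g \<Omega> D G L a y0 i k)))"
  define Z where "Z = (\<Sum>j = 1..ader_N L. w j * e j)"
  have w: "\<forall>i\<in>{1..ader_N L}. w i > 0" using Suc unfolding w_def by auto
  have Z: "Z > 0" unfolding Z_def e_def using w ader_N_ge_1[of L] by (intro sum_pos) auto
  have "ader_weight f g \<Omega> D G L a y0 (Suc k) i = w i * e i / Z" for i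
    unfolding w_def e_def Z_def by simp
  moreover have "(\<Sum>i=1..ader_N L. w i * e i / Z) = 1"
    using Z unfolding Z_def by (simp add: sum_divide_distrib[symmetric])
  ultimately show ?case using w Z unfolding e_def by auto
qed

lemma ader_play_in:
  assumes "\<forall>i\<ge>1. y0 i \<in> \<Omega>"
  shows "ader_play f g \<Omega> D G L a y0 k \<in> \<Omega>"
  unfolding ader_play_def
  using ader_weight_simplex[of L a y0 k] ader_expert_in[OF assms]
  by (intro convex_sum[OF _ convex_dom]) (auto simp: less_imp_le)

lemma loss_ader_play_le:
  assumes t: "1 \<le> t" and y0: "\<forall>i\<ge>1. y0 i \<in> \<Omega>"
  shows "f t (ader_play f g \<Omega> D G L a y0 k)
    \<le> (\<Sum>i=1..ader_N L. ader_weight f g \<Omega> D G L a y0 k i * f t (ader_expert g \<Omega> D G L a y0 i k))"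
  unfolding ader_play_def
proof (rule convex_on_sum)
  show "convex_on \<Omega> (f t)" using convex_loss t by simp
  show "(\<Sum>i=1..ader_N L. ader_weight f g \<Omega> D G L a y0 k i) = 1"
    using ader_weight_simplex by blast
  fix i assume "i \<in> {1..ader_N L}"
  then show "0 \<le> ader_weight f g \<Omega> D G L a y0 k i" "ader_expert g \<Omega> D G L a y0 i k \<in> \<Omega>"
    using ader_weight_simplex[of L a y0 k] ader_expert_in[OF y0] by (auto simp: less_imp_le)
qed (use ader_N_ge_1[of L] in auto)

text \<open>The standard Hedge analysis: \<open>ln\<close> of the weight of expert \<open>j\<close> telescopes.\<close>

lemma ader_hedge_regret:
  fixes L a :: nat and y0 :: "nat \<Rightarrow> 'a"
  defines "W \<equiv> ader_weight f g \<Omega> D G L a y0"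
    and "loss \<equiv> (\<lambda>k i. f (a + k) (ader_expert g \<Omega> D G L a y0 i k))"
  assumes a: "a \<ge> 1" and L: "L > 0" and y0: "\<forall>i\<ge>1. y0 i \<in> \<Omega>" and j: "j \<in> {1..ader_N L}"
  shows "(\<Sum>k<n. \<Sum>i=1..ader_N L. W k i * loss k i)
     \<le> (\<Sum>k<n. loss k j) + ln (1 / ader_p1 L j) / ader_alpha L + ader_alpha L * n / 2"
proof -
  define N where "N = ader_N L"
  define \<alpha> where "\<alpha> = ader_alpha L"
  define Z where "Z = (\<lambda>k. \<Sum>i=1..N. W k i * exp (- \<alpha> * loss k i))"
  have \<alpha>: "\<alpha> > 0" unfolding \<alpha>_def ader_alpha_def using L by simp
  have W: "\<forall>i\<in>{1..N}. 0 < W k i" "(\<Sum>i=1..N. W k i) = 1" for k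
    using ader_weight_simplex unfolding W_def N_def by blast+
  have ln_Z: "ln (Z k) \<le> - \<alpha> * (\<Sum>i=1..N. W k i * loss k i) + \<alpha>^2/2" for k
    unfolding Z_def using W[of k] loss_range a ader_expert_in[OF y0] \<alpha>
    by (intro ln_sum_weighted_exp_le) (auto simp: loss_def less_imp_le)
  have W_Suc: "W (Suc k) j = W k j * exp (- \<alpha> * loss k j) / Z k" for k
    unfolding W_def Z_def loss_def \<alpha>_def N_def by simp
  have pos: "0 < W k j" "0 < Z k" for k
    using W j ader_N_ge_1[of L] unfolding Z_def N_def by (auto intro!: sum_pos)
  have ln_W_Suc: "ln (W (Suc k) j) = ln (W k j) - \<alpha> * loss k j - ln (Z k)" for k
    using pos[of k] by (simp add: W_Suc ln_div ln_mult)
  have "W 0 j = ader_p1 L j" unfolding W_def by simp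
  then have "ln (W n j) = ln (ader_p1 L j) - \<alpha> * (\<Sum>k<n. loss k j) - (\<Sum>k<n. ln (Z k))"
    by (induction n) (simp_all add: ln_W_Suc algebra_simps)
  moreover have "W n j \<le> (\<Sum>i=1..N. W n i)"
    using j W unfolding N_def by (intro member_le_sum) (auto simp: less_imp_le N_def)
  then have "ln (W n j) \<le> 0" using W[of n] j unfolding N_def by simp
  moreover have "(\<Sum>k<n. ln (Z k)) \<le> - \<alpha> * (\<Sum>k<n. \<Sum>i=1..N. W k i * loss k i) + n * \<alpha>^2/2"
    using sum_mono[of "{..<n}", OF ln_Z] by (simp add: sum.distrib sum_distrib_left)
  ultimately have "\<alpha> * (\<Sum>k<n. \<Sum>i=1..N. W k i * loss k i)
      \<le> \<alpha> * (\<Sum>k<n. loss k j) - ln (ader_p1 L j) + n * \<alpha>^2/2"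
    by linarith
  then have "(\<Sum>k<n. \<Sum>i=1..N. W k i * loss k i)
      \<le> ((\<Sum>k<n. loss k j) * \<alpha> - ln (ader_p1 L j) + n * \<alpha>^2/2) / \<alpha>"
    using \<alpha> by (simp add: field_simps)
  also have "\<dots> = (\<Sum>k<n. loss k j) + ln (1 / ader_p1 L j) / \<alpha> + \<alpha> * n / 2"
    using \<alpha> ader_p1_pos[of j L] j by (simp add: field_simps ln_div power2_eq_square)
  finally show ?thesis unfolding N_def \<alpha>_def .
qed

end

lemma floor_half_log_bounds:
  fixes q :: real
  assumes q: "q \<ge> 1"
  defines "z \<equiv> \<lfloor>log 2 q / 2\<rfloor>"
  shows "z \<ge> 0" "2 ^ nat z \<le> sqrt q" "sqrt q < 2 * 2 ^ nat z"
proof -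
  define m where "m = log 2 q / 2"
  show z: "z \<ge> 0" unfolding z_def using q by simp
  have sqrt_q: "sqrt q = 2 powr m"
  proof -
    have "2 powr m = (2 powr (log 2 q)) powr (1/2)" unfolding m_def by (simp add: powr_powr)
    also have "\<dots> = sqrt q" using q by (simp add: powr_half_sqrt)
    finally show ?thesis by simp
  qed
  have pow_z: "(2::real) ^ nat z = 2 powr (real_of_int z)"
    using z by (simp add: powr_realpow[symmetric])
  have "real_of_int z \<le> m" unfolding z_def m_def by (rule of_int_floor_le)
  then show "2 ^ nat z \<le> sqrt q" unfolding pow_z sqrt_q by (intro powr_mono) auto
  have "2 powr m < 2 powr (real_of_int z + 1)"
    unfolding z_def m_def by (intro powr_less_mono) linarith+
  then show "sqrt q < 2 * 2 ^ nat z" unfolding pow_z sqrt_q by (simp add: powr_add)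
qed

lemma k_I_ge_1:
  assumes "D > 0" "0 \<le> P"
  shows "1 \<le> k_I P D"
proof -
  have "1 \<le> 1 + 4*P/(7*D)" using assms by simp
  then show ?thesis unfolding k_I_def by simp
qed

lemma k_I_mono:
  assumes "D > 0" "0 \<le> P" "P \<le> P'"
  shows "k_I P D \<le> k_I P' D"
proof -
  have "1 + 4*P/(7*D) \<le> 1 + 4*P'/(7*D)" "0 < 1 + 4*P/(7*D)"
    using assms by (simp_all add: divide_right_mono add_pos_nonneg)
  then show ?thesis unfolding k_I_def by (intro add_right_mono floor_mono divide_right_mono) simp_all
qed

text \<open>The optimal OGD step size for path length \<open>P\<close> over \<open>L\<close> rounds is
  \<open>\<eta>\<^sup>* = sqrt ((7D\<^sup>2/2 + 2DP)/(G\<^sup>2L))\<close>; the index \<open>k_I P D\<close> picks a grid step size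
  within a factor \<open>2\<close> below it.\<close>

lemma ader_eta_k_I:
  assumes D: "D > 0" and G: "G > 0" and L: "L > 0" and P: "0 \<le> P" "P \<le> D * L"
  defines "j \<equiv> nat (k_I P D)" and "\<eta>_opt \<equiv> D / G * sqrt (7 / (2 * real L)) * sqrt (1 + 4*P/(7*D))"
  shows "j \<in> {1..ader_N L}" "ader_eta D G L j \<le> \<eta>_opt" "\<eta>_opt \<le> 2 * ader_eta D G L j"
proof -
  define q where "q = 1 + 4*P/(7*D)"
  define z where "z = \<lfloor>log 2 q / 2\<rfloor>"
  have q: "q \<ge> 1" unfolding q_def using P D by simp
  have z: "z \<ge> 0" "2 ^ nat z \<le> sqrt q" "sqrt q < 2 * 2 ^ nat z"
    using floor_half_log_bounds[OF q] unfolding z_def by auto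
  have j: "j = nat z + 1" unfolding j_def k_I_def z_def q_def using z(1) z_def q_def
    by (simp add: nat_add_distrib)
  have "q \<le> 1 + 4 * real L / 7" unfolding q_def using P D by (simp add: field_simps)
  then have "log 2 q / 2 \<le> log 2 (1 + 4 * real L / 7) / 2" using q by simp
  then have "z \<le> \<lceil>log 2 (1 + 4 * real L / 7) / 2\<rceil>"
    unfolding z_def by (meson floor_le_ceiling order_trans floor_mono)
  then show "j \<in> {1..ader_N L}" unfolding ader_N_def using j z(1) by auto
  define c where "c = D / G * sqrt (7 / (2 * real L))"
  have c: "c > 0" unfolding c_def using D G L by simp
  have \<eta>: "ader_eta D G L j = 2 ^ nat z * c" unfolding ader_eta_def c_def using j by simp
  have \<eta>_opt: "\<eta>_opt = c * sqrt q" unfolding \<eta>_opt_def c_def q_def ..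
  show "ader_eta D G L j \<le> \<eta>_opt" unfolding \<eta> \<eta>_opt using z(2) c by (simp add: mult.commute)
  show "\<eta>_opt \<le> 2 * ader_eta D G L j" unfolding \<eta> \<eta>_opt using z(3) c by (simp add: mult.commute)
qed

lemma ogd_bound_near_optimal_step:
  fixes D G P \<eta> :: real and L :: nat
  assumes D: "D > 0" and G: "G > 0" and L: "L > 0" and P: "0 \<le> P" and \<eta>: "\<eta> > 0"
  defines "\<eta>_opt \<equiv> D / G * sqrt (7 / (2 * real L)) * sqrt (1 + 4*P/(7*D))"
  assumes lower: "\<eta> \<le> \<eta>_opt" and upper: "\<eta>_opt \<le> 2*\<eta>"
  shows "(D^2 + 2*D*P)/(2*\<eta>) + \<eta>*G^2*L/2 \<le> 3*D*G * sqrt L + 3*G * sqrt (D*P) * sqrt L"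
proof -
  define X where "X = 7*D^2/2 + 2*D*P"
  have "\<eta>_opt^2 = (D/G)^2 * sqrt (7/(2*real L))^2 * sqrt (1 + 4*P/(7*D))^2"
    unfolding \<eta>_opt_def by (simp only: power_mult_distrib)
  also have "\<dots> = (D/G)^2 * (7/(2*real L)) * (1 + 4*P/(7*D))"
    using D P by simp
  also have "\<dots> = X / (G^2 * L)"
    unfolding X_def using D G L by (simp add: field_simps power2_eq_square)
  finally have X: "X = \<eta>_opt^2 * G^2 * L" using G L by (simp add: field_simps)
  have \<eta>_opt_pos: "\<eta>_opt > 0" using \<eta> lower by simp
  have "sqrt X = \<eta>_opt * G * sqrt L"
    unfolding X using \<eta>_opt_pos G by (simp add: real_sqrt_mult)
  then have sqrt_X: "G * sqrt L * sqrt X = \<eta>_opt * G^2 * L"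
    by (simp add: power2_eq_square)
  have "(D^2 + 2*D*P)/(2*\<eta>) \<le> X/(2*\<eta>)" unfolding X_def using \<eta> D by (intro divide_right_mono) auto
  also have "\<dots> \<le> X / \<eta>_opt" using X \<eta>_opt_pos upper by (intro divide_left_mono) auto
  also have "\<dots> = \<eta>_opt * G^2 * L" unfolding X using \<eta>_opt_pos by (simp add: power2_eq_square)
  moreover have "\<eta>*G^2*L/2 \<le> \<eta>_opt*G^2*L/2" using lower by (intro divide_right_mono mult_right_mono) auto
  ultimately have "(D^2 + 2*D*P)/(2*\<eta>) + \<eta>*G^2*L/2 \<le> 3/2 * (G * sqrt L * sqrt X)"
    unfolding sqrt_X by linarith
  also have "\<dots> \<le> 3/2 * (G * sqrt L * (2*D + sqrt 2 * sqrt (D*P)))"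
  proof -
    have "sqrt X \<le> sqrt (7*D^2/2) + sqrt (2*D*P)" unfolding X_def
      using D P by (intro sqrt_add_le_add_sqrt) auto
    also have "sqrt (7*D^2/2) \<le> sqrt (4*D^2)" by simp
    finally have "sqrt X \<le> sqrt (4*D^2) + sqrt (2*D*P)" by simp
    also have "sqrt (4*D^2) = 2*D" using D by (simp add: real_sqrt_mult)
    also have "sqrt (2*D*P) = sqrt 2 * sqrt (D*P)" by (simp add: real_sqrt_mult mult.assoc)
    finally show ?thesis using G by (intro mult_left_mono) auto
  qed
  also have "\<dots> = 3*D*G * sqrt L + (3/2 * sqrt 2) * (G * sqrt (D*P) * sqrt L)"
    by (simp add: algebra_simps)
  also have "\<dots> \<le> 3*D*G * sqrt L + 3 * (G * sqrt (D*P) * sqrt L)"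
    using G D P sqrt2_less_2 by (intro add_left_mono mult_right_mono) auto
  finally show ?thesis by (simp add: algebra_simps)
qed

lemma ader_hedge_overhead:
  assumes L: "L > 0" and j: "1 \<le> j"
  shows "ln (1 / ader_p1 L j) / ader_alpha L + ader_alpha L * L / 2
    \<le> sqrt L * ln (real j + 1) + sqrt 2 * sqrt L"
proof -
  have sqrt8: "sqrt (8::real) = 2 * sqrt 2"
    using real_sqrt_mult[of 4 2] by simp
  have \<alpha>: "ader_alpha L = 2 * sqrt 2 / sqrt L" unfolding ader_alpha_def
    by (simp add: real_sqrt_divide sqrt8)
  have p: "ader_p1 L j > 0" using ader_p1_pos j by simp
  have "ln (1 / ader_p1 L j) \<le> ln ((real j + 1)^2)"
    using ader_p1_ge[OF j, of L] p by (simp add: field_simps)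
  also have "\<dots> = 2 * ln (real j + 1)" by (simp add: ln_realpow)
  finally have "ln (1 / ader_p1 L j) / ader_alpha L \<le> 2 * ln (real j + 1) / ader_alpha L"
    unfolding \<alpha> using L by (intro divide_right_mono) auto
  also have "\<dots> = sqrt L * ln (real j + 1) / sqrt 2"
    unfolding \<alpha> using L by (simp add: field_simps)
  also have "\<dots> \<le> sqrt L * ln (real j + 1) / 1" by (intro divide_left_mono) auto
  moreover have "ader_alpha L * L / 2 = sqrt 2 * sqrt L"
  proof -
    have "ader_alpha L * L / 2 = sqrt 2 * (real L / sqrt L)" unfolding \<alpha> by simp
    also have "real L / sqrt L = sqrt L" by (rule real_div_sqrt) simp
    finally show ?thesis .
  qed
  ultimately show ?thesis by linarith
qed

context oco
begin

lemma ader_dynamic_regret: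
  fixes L a :: nat and y0 u :: "nat \<Rightarrow> 'a"
  defines "P \<equiv> (\<Sum>k<L. norm (u (a+k+1) - u (a+k)))"
  assumes a: "a \<ge> 1" and L: "L > 0" and y0: "\<forall>i\<ge>1. y0 i \<in> \<Omega>" and u: "\<forall>k\<le>L. u (a+k) \<in> \<Omega>"
  shows "(\<Sum>k<L. f (a+k) (ader_play f g \<Omega> D G L a y0 k) - f (a+k) (u (a+k)))
     \<le> sqrt L * (ln (real (nat (k_I P D)) + 1) + sqrt 2 + 3*D*G) + 3*G * sqrt (D*P) * sqrt L"
proof -
  define N where "N = ader_N L"
  define W where "W = ader_weight f g \<Omega> D G L a y0"
  define loss where "loss = (\<lambda>k i. f (a + k) (ader_expert g \<Omega> D G L a y0 i k))"
  define j where "j = nat (k_I P D)"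
  have "norm (u (a+k+1) - u (a+k)) \<le> D" if "k < L" for k
    using u[rule_format, of k] u[rule_format, of "k+1"] that diameter by (simp add: add.assoc)
  then have "P \<le> (\<Sum>k<L. D)" unfolding P_def by (intro sum_mono) simp
  then have P: "0 \<le> P" "P \<le> D * L" unfolding P_def by (simp_all add: sum_nonneg mult.commute)
  note step = ader_eta_k_I[OF D_pos G_pos L P, folded j_def]
  have j: "j \<in> {1..N}" using step(1) unfolding N_def .
  have jensen: "f (a+k) (ader_play f g \<Omega> D G L a y0 k) \<le> (\<Sum>i=1..N. W k i * loss k i)" for k
    unfolding loss_def W_def N_def using a y0 by (intro loss_ader_play_le) auto
  have hedge: "(\<Sum>k<L. \<Sum>i=1..N. W k i * loss k i)
      \<le> (\<Sum>k<L. loss k j) + ln (1 / ader_p1 L j) / ader_alpha L + ader_alpha L * L / 2"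
    unfolding W_def loss_def N_def using j[unfolded N_def] by (rule ader_hedge_regret[OF a L y0])
  have overhead: "ln (1 / ader_p1 L j) / ader_alpha L + ader_alpha L * L / 2
      \<le> sqrt L * ln (real j + 1) + sqrt 2 * sqrt L"
    using ader_hedge_overhead L j by simp
  have \<eta>: "ader_eta D G L j > 0" unfolding ader_eta_def using D_pos G_pos L by simp
  have "(\<Sum>k<L. loss k j - f (a+k) (u (a+k)))
      \<le> (D^2 + 2*D*P)/(2*ader_eta D G L j) + ader_eta D G L j*G^2*L/2"
    unfolding loss_def ader_expert_def P_def using ogd_dynamic_regret[OF a \<eta> _ u] y0 j by auto
  also have "\<dots> \<le> 3*D*G * sqrt L + 3*G * sqrt (D*P) * sqrt L"
    using ogd_bound_near_optimal_step[OF D_pos G_pos L P(1) \<eta> step(2,3)] .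
  finally have ogd: "(\<Sum>k<L. loss k j) - (\<Sum>k<L. f (a+k) (u (a+k)))
      \<le> 3*D*G * sqrt L + 3*G * sqrt (D*P) * sqrt L"
    by (simp add: sum_subtractf)
  have "(\<Sum>k<L. f (a+k) (ader_play f g \<Omega> D G L a y0 k)) \<le> (\<Sum>k<L. \<Sum>i=1..N. W k i * loss k i)"
    using jensen by (rule sum_mono)
  then show ?thesis using hedge overhead ogd unfolding j_def sum_subtractf by (simp add: algebra_simps)
qed

end

section \<open>Geometric covering intervals\<close>

lemma geo_intervalsE:
  assumes "J \<in> geo_intervals"
  obtains i k where "1 \<le> i" "J = {i*2^k ..< (i+1)*2^k}"
proof -
  obtain i k where ik: "1 \<le> i" "J = {i*2^k .. (i+1)*2^k - 1}"
    using assms unfolding geo_intervals_def by auto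
  have "(i+1)*2^k = Suc ((i+1)*2^k - 1)" by simp
  then have "J = {i*2^k ..< (i+1)*2^k}" unfolding ik by (metis atLeastLessThanSuc_atLeastAtMost)
  then show ?thesis using that ik by auto
qed

lemma geo_intervalsI:
  assumes "1 \<le> a" "2^k dvd a"
  shows "{a ..< a + 2^k} \<in> geo_intervals"
proof -
  obtain i where i: "a = 2^k * i" using assms(2) by (auto elim: dvdE)
  have "1 \<le> i" using assms(1) i by (cases i) auto
  have "(i+1)*2^k = Suc ((i+1)*2^k - 1)" by simp
  then have "{a ..< a + 2^k} = {i*2^k .. (i+1)*2^k - 1}"
    using i by (metis atLeastLessThanSuc_atLeastAtMost add.commute distrib_left mult.commute mult_1)
  then show ?thesis unfolding geo_intervals_def using \<open>1 \<le> i\<close> by blast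
qed

lemma geo_intervalsE':
  assumes "J \<in> geo_intervals"
  obtains i k where "1 \<le> i" "J = {i*2^k ..< (i+1)*2^k}" "Min J = i*2^k" "card J = 2^k"
proof -
  obtain i k where ik: "1 \<le> i" "J = {i*2^k ..< (i+1)*2^k}" using geo_intervalsE[OF assms] .
  have "i*2^k < (i+1)*2^k" by simp
  then have "Min J = i*2^k" unfolding ik by (simp add: Min_eq_iff)
  moreover have "card J = 2^k" unfolding ik by simp
  ultimately show ?thesis using that ik by blast
qed

lemma geo_interval_eq: "J \<in> geo_intervals \<Longrightarrow> J = {Min J ..< Min J + card J}"
  by (erule geo_intervalsE') (simp add: algebra_simps)

lemma geo_interval_finite: "J \<in> geo_intervals \<Longrightarrow> finite J"
  by (subst geo_interval_eq) auto

lemma geo_interval_Min_ge_1: "J \<in> geo_intervals \<Longrightarrow> 1 \<le> Min J"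
  by (erule geo_intervalsE') (simp add: Suc_le_eq)

lemma geo_interval_card_pos: "J \<in> geo_intervals \<Longrightarrow> 0 < card J"
  by (erule geo_intervalsE') simp

lemma geo_interval_mem_ge_1: "J \<in> geo_intervals \<Longrightarrow> u \<in> J \<Longrightarrow> 1 \<le> u"
  using geo_interval_Min_ge_1 geo_interval_finite by (meson Min_le order_trans)

lemma geo_interval_Int_lessThan:
  assumes "J \<in> geo_intervals" "t \<in> J"
  shows "J \<inter> {..<t} = {Min J..<t}"
proof -
  have J: "J = {Min J ..< Min J + card J}" using geo_interval_eq[OF assms(1)] .
  have "t < Min J + card J" using assms(2) J by auto
  then show ?thesis by (subst J) auto
qed

text \<open>The experts AOA has created by round \<open>s\<close>.\<close>

definition geo_started :: "nat \<Rightarrow> nat set set" where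
  "geo_started s = {J \<in> geo_intervals. Min J \<le> s}"

lemma geo_started_subset:
  "geo_started s \<subseteq> (\<lambda>(i,k). {i*2^k ..< (i+1)*2^k}) ` ({1..s} \<times> {0..nat \<lfloor>log 2 (real s)\<rfloor>})"
proof
  fix J assume J: "J \<in> geo_started s"
  then obtain i k where ik: "1 \<le> i" "J = {i*2^k ..< (i+1)*2^k}" "Min J = i*2^k"
    unfolding geo_started_def by (auto elim: geo_intervalsE')
  then have le: "i*2^k \<le> s" using J unfolding geo_started_def by auto
  moreover have "i \<le> i*2^k" by simp
  ultimately have i: "i \<le> s" by linarith
  have "2^k \<le> s" using le ik(1) by (metis le_trans mult_le_mono1 mult_1)
  then have "real k \<le> log 2 (real s)" by (rule le_log2_of_power)
  then have "k \<le> nat \<lfloor>log 2 (real s)\<rfloor>" by (simp add: le_nat_iff le_floor_iff)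
  with i show "J \<in> (\<lambda>(i,k). {i*2^k ..< (i+1)*2^k}) ` ({1..s} \<times> {0..nat \<lfloor>log 2 (real s)\<rfloor>})"
    using ik by force
qed

lemma finite_geo_started: "finite (geo_started s)"
  using geo_started_subset by (rule finite_subset) auto

lemma card_geo_started_le:
  assumes "1 \<le> s"
  shows "real (card (geo_started s)) \<le> real s * (1 + log 2 (real s))"
proof -
  define K where "K = nat \<lfloor>log 2 (real s)\<rfloor>"
  have "card (geo_started s) \<le> card ((\<lambda>(i,k). {i*2^k ..< (i+1)*2^k}) ` ({1..s} \<times> {0..K}))"
    using geo_started_subset unfolding K_def by (intro card_mono) auto
  also have "\<dots> \<le> card ({1..s} \<times> {0..K})" by (rule card_image_le) auto
  also have "\<dots> = s * (K + 1)" by (simp add: card_cartesian_product)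
  finally have "real (card (geo_started s)) \<le> real s * (real K + 1)"
    by (metis of_nat_le_iff of_nat_mult of_nat_add of_nat_1)
  moreover have "real K \<le> log 2 (real s)" unfolding K_def using assms by simp
  then have "real s * (real K + 1) \<le> real s * (1 + log 2 (real s))" by (intro mult_left_mono) auto
  ultimately show ?thesis by linarith
qed

lemma active_subset_geo_started: "active t \<subseteq> geo_started t"
  unfolding active_def geo_started_def using geo_interval_finite by auto

lemma finite_active: "finite (active t)"
  using active_subset_geo_started finite_geo_started by (rule finite_subset)

lemma geo_started_active:
  assumes "t \<le> s"
  shows "{J \<in> geo_started s. t \<in> J} = active t"
  using active_subset_geo_started[of t] assms unfolding active_def geo_started_def by auto

lemma length_aoa_hist: "length (aoa_hist f g \<Omega> D G x0 n) = n"
  by (induction n) auto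

lemma aoa_hist_nth: "u < n \<Longrightarrow> aoa_hist f g \<Omega> D G x0 n ! u = aoa f g \<Omega> D G x0 (Suc u)"
proof (induction n)
  case 0
  then show ?case by simp
next
  case (Suc n)
  show ?case
  proof (cases "u < n")
    case True
    then show ?thesis using Suc by (simp add: nth_append length_aoa_hist)
  next
    case False
    then have "u = n" using Suc by simp
    then show ?thesis unfolding aoa_def by simp
  qed
qed

lemma aoa_eq_aoa_next:
  "1 \<le> t \<Longrightarrow> aoa f g \<Omega> D G x0 t = aoa_next f g \<Omega> D G x0 (aoa_hist f g \<Omega> D G x0 (t - 1))"
  unfolding aoa_def by (cases t) (auto simp: nth_append length_aoa_hist)

context oco
begin

text \<open>In the notation of the paper, \<open>play t\<close> is \<open>w\<^sub>t\<close>, \<open>expert J t\<close> is \<open>w\<^sub>t\<^sub>,\<^sub>J\<close>, and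
  \<open>weight J t\<close> is the unnormalised weight \<open>w(R\<^sub>t\<^sub>-\<^sub>1\<^sub>,\<^sub>J, C\<^sub>t\<^sub>-\<^sub>1\<^sub>,\<^sub>J)\<close>.\<close>

definition "play t = aoa f g \<Omega> D G x0 t"
definition "expert J t = expert_play f g \<Omega> D G x0 J t"
definition "inst_regret J t = f t (play t) - f t (expert J t)"
definition "weight J t =
  anh_w (\<Sum>u\<in>{Min J..<t}. inst_regret J u) (\<Sum>u\<in>{Min J..<t}. \<bar>inst_regret J u\<bar>)"

lemma play_eq_weighted_average:
  assumes t: "1 \<le> t"
  shows "play t = (\<Sum>J\<in>active t. (weight J t / (\<Sum>J'\<in>active t. weight J' t)) *\<^sub>R expert J t)"
proof -
  define hs where "hs = aoa_hist f g \<Omega> D G x0 (t - 1)"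
  have len: "length hs + 1 = t" unfolding hs_def using t by (simp add: length_aoa_hist)
  have hs: "hs ! (u - 1) = play u" if "1 \<le> u" "u < t" for u
    unfolding hs_def play_def using that aoa_hist_nth[of "u - 1" "t - 1" f g \<Omega> D G x0] by simp
  have W: "anh_w (\<Sum>u \<in> {Min J..<t}. f u (hs ! (u - 1)) - f u (expert_play f g \<Omega> D G x0 J u))
                 (\<Sum>u \<in> {Min J..<t}. \<bar>f u (hs ! (u - 1)) - f u (expert_play f g \<Omega> D G x0 J u)\<bar>)
            = weight J t" if "J \<in> active t" for J
  proof -
    have "1 \<le> Min J" using that geo_interval_Min_ge_1 unfolding active_def by blast
    then have "\<And>u. u \<in> {Min J..<t} \<Longrightarrow> hs ! (u - 1) = play u" using hs by auto
    then show ?thesis unfolding weight_def inst_regret_def expert_def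
      by (intro arg_cong2[where f = anh_w] sum.cong) auto
  qed
  have total: "(\<Sum>J'\<in>active t.
      anh_w (\<Sum>u \<in> {Min J'..<t}. f u (hs ! (u - 1)) - f u (expert_play f g \<Omega> D G x0 J' u))
            (\<Sum>u \<in> {Min J'..<t}. \<bar>f u (hs ! (u - 1)) - f u (expert_play f g \<Omega> D G x0 J' u)\<bar>))
      = (\<Sum>J'\<in>active t. weight J' t)"
    by (rule sum.cong[OF refl W])
  have "play t = aoa_next f g \<Omega> D G x0 hs" unfolding play_def hs_def using aoa_eq_aoa_next[OF t] by simp
  also have "\<dots> = (\<Sum>J\<in>active t. (weight J t / (\<Sum>J'\<in>active t. weight J' t)) *\<^sub>R expert J t)"
    unfolding aoa_next_def Let_def len total
    by (rule sum.cong[OF refl]) (simp only: W expert_def)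
  finally show ?thesis .
qed

lemma expert_in: "J \<in> geo_intervals \<Longrightarrow> expert J t \<in> \<Omega>"
  unfolding expert_def expert_play_def using init_in_dom by (intro ader_play_in) auto

lemma weight_nonneg: "0 \<le> weight J t"
  unfolding weight_def by (intro anh_w_nonneg sum_nonneg) simp

lemma play_in:
  assumes t: "1 \<le> t"
  shows "play t \<in> \<Omega>"
proof (cases "(\<Sum>J\<in>active t. weight J t) = 0")
  case True
  \<comment> \<open>all weights vanish, and division by zero makes the play \<open>0\<close>\<close>
  then show ?thesis using play_eq_weighted_average[OF t] zero_in_dom by simp
next
  case False
  define S where "S = (\<Sum>J\<in>active t. weight J t)"
  have "S \<ge> 0" unfolding S_def by (intro sum_nonneg) (simp add: weight_nonneg)
  then have S: "S > 0" using False unfolding S_def by linarith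
  show ?thesis unfolding play_eq_weighted_average[OF t] S_def[symmetric]
  proof (rule convex_sum[OF finite_active convex_dom])
    show "(\<Sum>J\<in>active t. weight J t / S) = 1"
      using S unfolding S_def by (simp add: sum_divide_distrib[symmetric])
    fix J assume "J \<in> active t"
    then show "0 \<le> weight J t / S" "expert J t \<in> \<Omega>"
      using weight_nonneg expert_in S unfolding active_def by auto
  qed
qed

lemma abs_inst_regret_le:
  assumes "1 \<le> u" "J \<in> geo_intervals"
  shows "\<bar>inst_regret J u\<bar> \<le> 1"
proof -
  have "play u \<in> \<Omega>" "expert J u \<in> \<Omega>" using play_in expert_in assms by blast+
  then have "0 \<le> f u (play u)" "f u (play u) \<le> 1" "0 \<le> f u (expert J u)" "f u (expert J u) \<le> 1"
    using loss_range assms(1) by blast+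
  then show ?thesis unfolding inst_regret_def by linarith
qed

text \<open>By Jensen's inequality the combined play is no worse than the weighted average of the
  experts; this is the only property of the combination that the analysis uses.\<close>

lemma weighted_inst_regret_nonpos:
  assumes t: "1 \<le> t"
  shows "(\<Sum>J\<in>active t. weight J t * inst_regret J t) \<le> 0"
proof (cases "(\<Sum>J\<in>active t. weight J t) = 0")
  case True
  then have "\<forall>J\<in>active t. weight J t = 0"
    using sum_nonneg_eq_0_iff[OF finite_active, where f = "\<lambda>J. weight J t"] weight_nonneg by simp
  then show ?thesis by simp
next
  case False
  define S where "S = (\<Sum>J\<in>active t. weight J t)"
  have "S \<ge> 0" unfolding S_def by (intro sum_nonneg) (simp add: weight_nonneg)
  then have S: "S > 0" using False unfolding S_def by linarith
  have "f t (play t) \<le> (\<Sum>J\<in>active t. (weight J t / S) * f t (expert J t))"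
    unfolding play_eq_weighted_average[OF t] S_def[symmetric]
  proof (rule convex_on_sum[OF finite_active])
    show "active t \<noteq> {}" using False by auto
    show "convex_on \<Omega> (f t)" using convex_loss t by auto
    show "(\<Sum>J\<in>active t. weight J t / S) = 1"
      using S unfolding S_def by (simp add: sum_divide_distrib[symmetric])
    fix J assume "J \<in> active t"
    then show "0 \<le> weight J t / S" "expert J t \<in> \<Omega>"
      using weight_nonneg expert_in S unfolding active_def by auto
  qed
  then have "S * f t (play t) \<le> S * (\<Sum>J\<in>active t. (weight J t / S) * f t (expert J t))"
    using S by (intro mult_left_mono) auto
  also have "\<dots> = (\<Sum>J\<in>active t. weight J t * f t (expert J t))"
    using S by (simp add: sum_distrib_left)
  finally show ?thesis
    unfolding inst_regret_def S_def by (simp add: right_diff_distrib sum_subtractf sum_distrib_right)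
qed

end

section \<open>The potential argument of AdaNormalHedge\<close>

lemma ln_one_plus_ge_half:
  fixes y :: real
  assumes "0 \<le> y" "y \<le> 1"
  shows "y \<le> 2 * ln (1 + y)"
proof -
  have "y/2 \<le> y/(1+y)" using assms by (intro divide_left_mono) auto
  also have "\<dots> \<le> ln (1 + y)" using ln_add1_ge[OF assms(1)] by (simp add: add.commute)
  finally show ?thesis by simp
qed

lemma ln_one_plus_increment_ge:
  fixes x c :: real
  assumes "0 \<le> x" "x \<le> 1" "0 \<le> c"
  shows "x/(c+1) \<le> 2 * ln (1 + (c + x)) - 2 * ln (1 + c)"
proof -
  have "x/(1+c) \<le> 2 * ln (1 + x/(1+c))" using assms by (intro ln_one_plus_ge_half) auto
  also have "1 + x/(1+c) = (1 + (c + x))/(1+c)" using assms by (simp add: field_simps)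
  also have "ln \<dots> = ln (1 + (c + x)) - ln (1 + c)" using assms by (simp add: ln_div)
  finally show ?thesis by (simp add: add.commute)
qed

lemma Int_lessThan_Suc:
  "J \<inter> {..<Suc t} = (if t \<in> J then insert t (J \<inter> {..<t}) else J \<inter> {..<t})"
  by (auto simp: less_Suc_eq)

definition total_budget :: "nat \<Rightarrow> real" where
  "total_budget s = real (card (geo_started s)) * (1 + 4 * ln (1 + real s))"

context oco
begin

text \<open>Unlike the sums in \<open>weight\<close>, these are restricted to \<open>J\<close>: they freeze once the
  expert \<open>E\<^sub>J\<close> has been removed, and agree with those sums while \<open>t \<in> J\<close>.\<close>

definition "cum_regret J t = (\<Sum>u\<in>J \<inter> {..<t}. inst_regret J u)"
definition "cum_abs_regret J t = (\<Sum>u\<in>J \<inter> {..<t}. \<bar>inst_regret J u\<bar>)"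
definition "potential_budget J t =
  1 + 2 * (\<Sum>u\<in>J \<inter> {..<t}. \<bar>inst_regret J u\<bar> / (cum_abs_regret J u + 1))"

lemma cum_abs_regret_nonneg: "0 \<le> cum_abs_regret J t"
  unfolding cum_abs_regret_def by (simp add: sum_nonneg)

lemma abs_cum_regret_le: "\<bar>cum_regret J t\<bar> \<le> cum_abs_regret J t"
  unfolding cum_regret_def cum_abs_regret_def by (rule sum_abs)

lemma cum_regret_Suc:
  assumes "J \<in> geo_intervals"
  shows "cum_regret J (Suc t) = cum_regret J t + (if t \<in> J then inst_regret J t else 0)"
    and "cum_abs_regret J (Suc t) = cum_abs_regret J t + (if t \<in> J then \<bar>inst_regret J t\<bar> else 0)"
    and "potential_budget J (Suc t) = potential_budget J t
           + (if t \<in> J then 2 * \<bar>inst_regret J t\<bar> / (cum_abs_regret J t + 1) else 0)"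
  using geo_interval_finite[OF assms]
  unfolding cum_regret_def cum_abs_regret_def potential_budget_def Int_lessThan_Suc
  by (simp_all add: algebra_simps)

lemma potential_step:
  assumes J: "J \<in> geo_intervals"
  shows "anh_Phi (cum_regret J (Suc t)) (cum_abs_regret J (Suc t)) - potential_budget J (Suc t)
       \<le> anh_Phi (cum_regret J t) (cum_abs_regret J t) - potential_budget J t
          + (if t \<in> J then weight J t * inst_regret J t else 0)"
proof (cases "t \<in> J")
  case False
  then show ?thesis using cum_regret_Suc[OF J] by simp
next
  case True
  have "weight J t = anh_w (cum_regret J t) (cum_abs_regret J t)"
    unfolding weight_def cum_regret_def cum_abs_regret_def geo_interval_Int_lessThan[OF J True] ..
  moreover have "anh_Phi (cum_regret J t + inst_regret J t) (cum_abs_regret J t + \<bar>inst_regret J t\<bar>)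
      \<le> anh_Phi (cum_regret J t) (cum_abs_regret J t)
         + anh_w (cum_regret J t) (cum_abs_regret J t) * inst_regret J t
         + 2 * \<bar>inst_regret J t\<bar> / (cum_abs_regret J t + 1)"
    using cum_abs_regret_nonneg abs_cum_regret_le
      abs_inst_regret_le[OF geo_interval_mem_ge_1[OF J True] J]
    by (rule anh_Phi_increment_le)
  ultimately show ?thesis using True cum_regret_Suc[OF J] by simp
qed

lemma sum_normalized_abs_regret_le:
  assumes J: "J \<in> geo_intervals"
  shows "(\<Sum>u\<in>J \<inter> {..<t}. \<bar>inst_regret J u\<bar> / (cum_abs_regret J u + 1))
    \<le> 2 * ln (1 + cum_abs_regret J t)"
proof (induction t)
  case 0
  then show ?case unfolding cum_abs_regret_def by simp
next
  case (Suc t)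
  show ?case
  proof (cases "t \<in> J")
    case False
    then show ?thesis using Suc cum_regret_Suc(2)[OF J] unfolding Int_lessThan_Suc by simp
  next
    case True
    have "\<bar>inst_regret J t\<bar> / (cum_abs_regret J t + 1)
        \<le> 2 * ln (1 + (cum_abs_regret J t + \<bar>inst_regret J t\<bar>)) - 2 * ln (1 + cum_abs_regret J t)"
      using abs_inst_regret_le[OF geo_interval_mem_ge_1[OF J True] J] cum_abs_regret_nonneg
      by (intro ln_one_plus_increment_ge) auto
    then show ?thesis
      using Suc True cum_regret_Suc(2)[OF J] geo_interval_finite[OF J]
      unfolding Int_lessThan_Suc by simp
  qed
qed

lemma cum_abs_regret_le_card:
  assumes J: "J \<in> geo_intervals"
  shows "cum_abs_regret J t \<le> card (J \<inter> {..<t})"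
proof -
  have "cum_abs_regret J t \<le> (\<Sum>u\<in>J \<inter> {..<t}. 1)" unfolding cum_abs_regret_def
    using abs_inst_regret_le geo_interval_mem_ge_1[OF J] J by (intro sum_mono) auto
  then show ?thesis by simp
qed

lemma potential_budget_le:
  assumes J: "J \<in> geo_intervals" and t: "t \<le> s + 1"
  shows "potential_budget J t \<le> 1 + 4 * ln (1 + real s)"
proof -
  have "J \<inter> {..<t} \<subseteq> {1..<s+1}" using geo_interval_mem_ge_1[OF J] t by auto
  then have "card (J \<inter> {..<t}) \<le> s" using card_mono[of "{1..<s+1}"] by fastforce
  then have "cum_abs_regret J t \<le> real s" using cum_abs_regret_le_card[OF J, of t] by linarith
  then have "ln (1 + cum_abs_regret J t) \<le> ln (1 + real s)"
    using cum_abs_regret_nonneg[of J t] by simp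
  then show ?thesis
    unfolding potential_budget_def using sum_normalized_abs_regret_le[OF J, of t] by linarith
qed

lemma sum_potential_le_budget:
  assumes "t \<le> s + 1"
  shows "(\<Sum>J\<in>geo_started s. anh_Phi (cum_regret J t) (cum_abs_regret J t) - potential_budget J t) \<le> 0"
  using assms
proof (induction t)
  case 0
  then show ?case unfolding cum_regret_def cum_abs_regret_def potential_budget_def anh_Phi_def by simp
next
  case (Suc t)
  have "(\<Sum>J\<in>geo_started s. anh_Phi (cum_regret J (Suc t)) (cum_abs_regret J (Suc t)) - potential_budget J (Suc t))
      \<le> (\<Sum>J\<in>geo_started s. anh_Phi (cum_regret J t) (cum_abs_regret J t) - potential_budget J t
          + (if t \<in> J then weight J t * inst_regret J t else 0))"
    by (intro sum_mono potential_step) (auto simp: geo_started_def)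
  also have "\<dots> = (\<Sum>J\<in>geo_started s. anh_Phi (cum_regret J t) (cum_abs_regret J t) - potential_budget J t)
      + (\<Sum>J\<in>{J \<in> geo_started s. t \<in> J}. weight J t * inst_regret J t)"
    by (simp add: sum.distrib sum.inter_filter[OF finite_geo_started])
  also have "(\<Sum>J\<in>{J \<in> geo_started s. t \<in> J}. weight J t * inst_regret J t) \<le> 0"
  proof (cases "t = 0")
    case True
    have none: "{J \<in> geo_started s. t \<in> J} = {}"
      using True geo_interval_mem_ge_1 unfolding geo_started_def by fastforce
    show ?thesis unfolding none by simp
  next
    case False
    then show ?thesis
      using Suc.prems geo_started_active[of t s] weighted_inst_regret_nonpos[of t] by simp
  qed
  finally show ?case using Suc by simp
qed

lemma meta_regret_le:
  assumes J: "J \<in> geo_intervals" and end_J: "Min J + card J \<le> s + 1"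
  shows "(\<Sum>u\<in>J. inst_regret J u) \<le> sqrt (3 * card J * ln (total_budget s))"
proof -
  define t where "t = Min J + card J"
  define X where "X = total_budget s"
  define R where "R = cum_regret J t"
  define C where "C = cum_abs_regret J t"
  have Jt: "J \<inter> {..<t} = J" using geo_interval_eq[OF J] unfolding t_def by auto
  have J_started: "J \<in> geo_started s" unfolding geo_started_def using J end_J geo_interval_card_pos[OF J] by auto
  then have "1 \<le> real (card (geo_started s))"
    using finite_geo_started[of s] by (simp add: Suc_le_eq card_gt_0_iff) blast
  moreover have "1 \<le> 1 + 4 * ln (1 + real s)" by simp
  ultimately have X: "1 \<le> X" unfolding X_def total_budget_def using mult_mono[of 1 _ 1] by fastforce
  have "anh_Phi R C \<le> (\<Sum>J\<in>geo_started s. anh_Phi (cum_regret J t) (cum_abs_regret J t))"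
    unfolding R_def C_def using J_started finite_geo_started
    by (intro member_le_sum) (auto simp: anh_Phi_def)
  also have "\<dots> \<le> (\<Sum>J\<in>geo_started s. potential_budget J t)"
    using sum_potential_le_budget[of t s] end_J unfolding t_def by (simp add: sum_subtractf)
  also have "\<dots> \<le> (\<Sum>J\<in>geo_started s. 1 + 4 * ln (1 + real s))"
    using end_J unfolding t_def by (intro sum_mono potential_budget_le) (auto simp: geo_started_def)
  also have "\<dots> = X" unfolding X_def total_budget_def by simp
  finally have Phi: "anh_Phi R C \<le> X" .
  have R: "R = (\<Sum>u\<in>J. inst_regret J u)" unfolding R_def cum_regret_def Jt ..
  have "C \<le> card J" unfolding C_def using cum_abs_regret_le_card[OF J, of t] Jt by simp
  show ?thesis
  proof (cases "R \<le> 0")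
    case True
    have "0 \<le> sqrt (3 * card J * ln X)" using X by simp
    then show ?thesis using True R unfolding X_def by linarith
  next
    case False
    then have "C > 0" using abs_cum_regret_le[of J t] unfolding R_def C_def by linarith
    have "exp (R^2 / (3 * C)) \<le> X" using Phi False unfolding anh_Phi_def by (simp add: max_def)
    then have "R^2 / (3 * C) \<le> ln X" using X by (simp add: ln_ge_iff)
    then have "R^2 \<le> 3 * C * ln X" using \<open>C > 0\<close> by (simp add: field_simps)
    also have "\<dots> \<le> 3 * card J * ln X" using \<open>C \<le> card J\<close> X by (intro mult_right_mono) auto
    finally have "R \<le> sqrt (3 * card J * ln X)" by (rule real_le_rsqrt)
    then show ?thesis using R unfolding X_def by simp
  qed
qed

end

section \<open>Covering an interval by dyadic blocks\<close>

text \<open>Any constant \<open>\<beta> \<ge> 1 + sqrt 2\<close>, i.e. with \<open>1 + 2\<beta> \<le> \<beta>\<^sup>2\<close>, would do.\<close>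

definition cover_const :: real where
  "cover_const = 245/100"

lemma sqrt_add_cover_const_le:
  fixes m x :: real
  assumes "0 \<le> x" "x \<le> m"
  shows "sqrt m + cover_const * sqrt x \<le> cover_const * sqrt (m + x)"
proof -
  have "sqrt m * sqrt x \<le> sqrt m * sqrt m" using assms by (intro mult_left_mono) auto
  then have mx: "sqrt m * sqrt x \<le> m" using assms by simp
  have "(sqrt m + cover_const * sqrt x)^2 = m + 2*cover_const*(sqrt m * sqrt x) + cover_const^2 * x"
    using assms by (simp add: power2_eq_square algebra_simps)
  also have "\<dots> \<le> cover_const^2 * (m + x)"
    using mx assms unfolding cover_const_def by (simp add: algebra_simps power2_eq_square)
  finally have "sqrt m + cover_const * sqrt x \<le> sqrt (cover_const^2 * (m + x))" by (rule real_le_rsqrt)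
  then show ?thesis unfolding cover_const_def by (simp add: real_sqrt_mult)
qed

lemma sqrt_mult_add_le:
  fixes x1 y1 x2 y2 :: real
  assumes "0 \<le> x1" "0 \<le> y1" "0 \<le> x2" "0 \<le> y2"
  shows "sqrt (x1*y1) + sqrt (x2*y2) \<le> sqrt ((x1+x2)*(y1+y2))"
proof -
  have am_gm: "sqrt ((x1*y2)*(x2*y1)) \<le> (x1*y2 + x2*y1)/2"
    using assms by (intro arith_geo_mean_sqrt) auto
  have "sqrt (x1*y1) * sqrt (x2*y2) = sqrt ((x1*y2)*(x2*y1))"
    by (simp add: real_sqrt_mult[symmetric] algebra_simps)
  then have "(sqrt (x1*y1) + sqrt (x2*y2))^2 = x1*y1 + x2*y2 + 2 * sqrt ((x1*y2)*(x2*y1))"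
    using assms by (simp add: power2_eq_square algebra_simps)
  also have "\<dots> \<le> (x1+x2)*(y1+y2)" using am_gm by (simp add: algebra_simps)
  finally show ?thesis by (rule real_le_rsqrt)
qed

lemma block_bounds_add:
  fixes A B m n P1 P2 S1 S2 :: real
  assumes "0 \<le> A" "0 \<le> B" "0 \<le> n" "n \<le> m" "0 \<le> P1" "0 \<le> P2"
    and "S1 \<le> A * sqrt m + B * sqrt (m * P1)"
    and "S2 \<le> cover_const * A * sqrt n + B * sqrt (n * P2)"
  shows "S1 + S2 \<le> cover_const * A * sqrt (m + n) + B * sqrt ((m + n) * (P1 + P2))"
proof -
  have "A * (sqrt m + cover_const * sqrt n) \<le> A * (cover_const * sqrt (m + n))"
    using sqrt_add_cover_const_le assms by (intro mult_left_mono) auto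
  moreover have "B * (sqrt (m * P1) + sqrt (n * P2)) \<le> B * sqrt ((m + n) * (P1 + P2))"
    using sqrt_mult_add_le[of m P1 n P2] assms by (intro mult_left_mono) auto
  ultimately show ?thesis using assms by (simp add: algebra_simps)
qed

lemma power2_dvd_power2_if_le_less:
  assumes "(2::nat)^j' \<le> n" "n < 2^j"
  shows "(2::nat)^j' dvd 2^j"
proof -
  have "(2::nat)^j' < 2^j" using assms by (rule le_less_trans)
  then have "j' < j" using power_less_imp_less_exp[of "2::nat" j' j] by simp
  then show ?thesis by (simp add: le_imp_power_dvd)
qed

lemma exists_max_power2_multiple:
  fixes r b :: nat
  assumes r: "1 \<le> r" and rb: "r \<le> b"
  obtains c m where "r \<le> c" "c \<le> b" "2^m dvd c" "\<And>c'. r \<le> c' \<Longrightarrow> c' \<le> b \<Longrightarrow> \<not> 2^(m+1) dvd c'"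
proof -
  define S where "S = {m::nat. \<exists>c. r \<le> c \<and> c \<le> b \<and> 2^m dvd c}"
  have "S \<subseteq> {..b}"
  proof
    fix m assume "m \<in> S"
    then obtain c where c: "r \<le> c" "c \<le> b" "2^m dvd c" unfolding S_def by auto
    then have "2^m \<le> c" using r by (intro dvd_imp_le) auto
    then have "m \<le> b" using less_exp[of m] c(2) by linarith
    then show "m \<in> {..b}" by simp
  qed
  then have S: "finite S" by (rule finite_subset) simp
  moreover have "0 \<in> S" unfolding S_def using rb by auto
  ultimately have "Max S \<in> S" by (intro Max_in) auto
  moreover have "Max S + 1 \<notin> S"
  proof
    assume "Max S + 1 \<in> S"
    then have "Max S + 1 \<le> Max S" by (rule Max_ge[OF S])
    then show False by simp
  qed
  ultimately obtain m where m: "m \<in> S" "m + 1 \<notin> S" by blast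
  from m(1) obtain c where c: "r \<le> c" "c \<le> b" "2^m dvd c" unfolding S_def by auto
  have "\<not> 2^(m+1) dvd c'" if "r \<le> c'" "c' \<le> b" for c'
    using m(2) that unfolding S_def by auto
  then show ?thesis by (rule that[OF c])
qed

text \<open>The split point: a multiple \<open>c\<close> of the largest power of two having a multiple in
  \<open>[r, s+1]\<close>. Every power of two that fits between \<open>r\<close> and \<open>c\<close>, or between \<open>c\<close> and \<open>s+1\<close>,
  then divides \<open>c\<close>.\<close>

lemma exists_dyadic_split:
  fixes r s :: nat
  assumes r: "1 \<le> r" and rs: "r \<le> s + 1"
  obtains c where "r \<le> c" "c \<le> s + 1"
    "\<forall>j. 2^j \<le> c - r \<longrightarrow> 2^j dvd c" "\<forall>j. 2^j \<le> s + 1 - c \<longrightarrow> 2^j dvd c"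
proof -
  obtain c m where c: "r \<le> c" "c \<le> s + 1" "2^m dvd c"
    and max: "\<And>c'. r \<le> c' \<Longrightarrow> c' \<le> s + 1 \<Longrightarrow> \<not> 2^(m+1) dvd c'"
    using exists_max_power2_multiple[OF r rs] by metis
  define M where "M = (2::nat)^(m+1)"
  have M: "0 < M" "c mod M < M" "M dvd c - c mod M" "c mod M \<le> c"
    unfolding M_def by (auto simp: minus_mod_eq_mult_div)
  have large: "M \<le> 2^j" if "\<not> 2^j dvd c" for j
  proof (rule ccontr)
    assume "\<not> M \<le> 2^j"
    then have "j \<le> m" using power_less_imp_less_exp[of "2::nat" j "m+1"] unfolding M_def by simp
    then have "(2::nat)^j dvd 2^m" by (simp add: le_imp_power_dvd)
    then show False using c(3) that by (blast intro: dvd_trans)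
  qed
  have "2^j dvd c" if "2^j \<le> c - r" for j
  proof (rule ccontr)
    assume "\<not> 2^j dvd c"
    then have "r \<le> c - c mod M" using large[of j] that M by linarith
    moreover have "c - c mod M \<le> s + 1" using c(2) by linarith
    ultimately show False using max M(3) unfolding M_def by blast
  qed
  moreover have "2^j dvd c" if "2^j \<le> s + 1 - c" for j
  proof (rule ccontr)
    assume "\<not> 2^j dvd c"
    then have "c - c mod M + M \<le> s + 1" using large[of j] that M by linarith
    moreover have "r \<le> c - c mod M + M" using c(1) M(2) by linarith
    moreover have "M dvd c - c mod M + M" using M(3) dvd_add dvd_refl by blast
    ultimately show False using max unfolding M_def by blast
  qed
  ultimately show ?thesis using that c by blast
qed

text \<open>\<open>h\<close> is to be the regret and \<open>p\<close> the comparator movement per round; the blocks are the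
  geometric covering intervals inside \<open>[r, s]\<close>.\<close>

locale dyadic_block_bound =
  fixes h p :: "nat \<Rightarrow> real" and A B :: real and r s :: nat
  assumes A_nonneg: "0 \<le> A" and B_nonneg: "0 \<le> B" and p_nonneg: "\<And>t. 0 \<le> p t"
    and block_bound: "\<And>a k. 1 \<le> a \<Longrightarrow> r \<le> a \<Longrightarrow> a + 2^k \<le> s + 1 \<Longrightarrow> 2^k dvd a \<Longrightarrow>
       (\<Sum>t\<in>{a..<a+2^k}. h t) \<le> A * sqrt (2^k) + B * sqrt (2^k * (\<Sum>t\<in>{a..<a+2^k}. p t))"
begin

lemma sum_p_nonneg: "0 \<le> (\<Sum>t\<in>X. p t)"
  by (simp add: sum_nonneg p_nonneg)

text \<open>Peeling off the largest dyadic block next to the split point leaves a remainder shorter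
  than that block, so the block lengths decrease geometrically.\<close>

lemma bound_right_of_split:
  "r \<le> a \<Longrightarrow> a + n \<le> s + 1 \<Longrightarrow> 1 \<le> a \<Longrightarrow> \<forall>j. 2^j \<le> n \<longrightarrow> 2^j dvd a \<Longrightarrow>
   (\<Sum>t\<in>{a..<a+n}. h t) \<le> cover_const * A * sqrt n + B * sqrt (n * (\<Sum>t\<in>{a..<a+n}. p t))"
proof (induction n arbitrary: a rule: less_induct)
  case (less n)
  show ?case
  proof (cases "n = 0")
    case True
    then show ?thesis by simp
  next
    case False
    then obtain j where j: "(2::nat)^j \<le> n" "n < 2 * 2^j" using ex_power_ivl1[of 2 n] by auto
    define m where "m = (2::nat)^j"
    define n' where "n' = n - m"
    have mn: "m \<le> n" "n' < m" "n = m + n'" unfolding m_def n'_def using j by auto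
    have "2^j dvd a" using less.prems(4) j by auto
    then have block: "(\<Sum>t\<in>{a..<a+m}. h t) \<le> A * sqrt m + B * sqrt (m * (\<Sum>t\<in>{a..<a+m}. p t))"
      using block_bound[of a j] less.prems mn unfolding m_def by auto
    have "(\<Sum>t\<in>{a+m..<(a+m)+n'}. h t)
        \<le> cover_const * A * sqrt n' + B * sqrt (n' * (\<Sum>t\<in>{a+m..<(a+m)+n'}. p t))"
    proof (rule less.IH)
      show "n' < n" "r \<le> a + m" "a + m + n' \<le> s + 1" "1 \<le> a + m" using less.prems mn m_def by auto
      show "\<forall>j'. 2^j' \<le> n' \<longrightarrow> 2^j' dvd a + m"
        using power2_dvd_power2_if_le_less[of _ n' j] mn \<open>2^j dvd a\<close> unfolding m_def
        by (metis dvd_add dvd_trans dvd_refl)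
    qed
    then have "(\<Sum>t\<in>{a..<a+m}. h t) + (\<Sum>t\<in>{a+m..<(a+m)+n'}. h t)
        \<le> cover_const * A * sqrt (real m + real n')
          + B * sqrt ((real m + real n') * ((\<Sum>t\<in>{a..<a+m}. p t) + (\<Sum>t\<in>{a+m..<(a+m)+n'}. p t)))"
      using mn by (intro block_bounds_add[OF A_nonneg B_nonneg _ _ sum_p_nonneg sum_p_nonneg block]) auto
    then show ?thesis using mn by (simp add: sum.atLeastLessThan_concat add.assoc)
  qed
qed

lemma bound_left_of_split:
  "r \<le> b - n \<Longrightarrow> n < b \<Longrightarrow> b \<le> s + 1 \<Longrightarrow> \<forall>j. 2^j \<le> n \<longrightarrow> 2^j dvd b \<Longrightarrow>
   (\<Sum>t\<in>{b-n..<b}. h t) \<le> cover_const * A * sqrt n + B * sqrt (n * (\<Sum>t\<in>{b-n..<b}. p t))"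
proof (induction n arbitrary: b rule: less_induct)
  case (less n)
  show ?case
  proof (cases "n = 0")
    case True
    then show ?thesis by simp
  next
    case False
    then obtain j where j: "(2::nat)^j \<le> n" "n < 2 * 2^j" using ex_power_ivl1[of 2 n] by auto
    define m where "m = (2::nat)^j"
    define n' where "n' = n - m"
    have mn: "m \<le> n" "n' < m" "n = m + n'" unfolding m_def n'_def using j by auto
    have "2^j dvd b - m" using less.prems(4) j unfolding m_def by (simp add: dvd_diff_nat)
    moreover have "b - m + 2^j = b" using mn less.prems unfolding m_def by simp
    ultimately have block: "(\<Sum>t\<in>{b-m..<b}. h t) \<le> A * sqrt m + B * sqrt (m * (\<Sum>t\<in>{b-m..<b}. p t))"
      using block_bound[of "b - m" j] less.prems mn unfolding m_def by auto
    have "(\<Sum>t\<in>{(b-m)-n'..<b-m}. h t)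
        \<le> cover_const * A * sqrt n' + B * sqrt (n' * (\<Sum>t\<in>{(b-m)-n'..<b-m}. p t))"
    proof (rule less.IH)
      show "n' < n" "r \<le> b - m - n'" "n' < b - m" "b - m \<le> s + 1" using less.prems mn m_def by auto
      show "\<forall>j'. 2^j' \<le> n' \<longrightarrow> 2^j' dvd b - m"
        using power2_dvd_power2_if_le_less[of _ n' j] mn \<open>2^j dvd b - m\<close> unfolding m_def
        by (metis dvd_trans)
    qed
    then have "(\<Sum>t\<in>{b-m..<b}. h t) + (\<Sum>t\<in>{(b-m)-n'..<b-m}. h t)
        \<le> cover_const * A * sqrt (real m + real n')
          + B * sqrt ((real m + real n') * ((\<Sum>t\<in>{b-m..<b}. p t) + (\<Sum>t\<in>{(b-m)-n'..<b-m}. p t)))"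
      using mn by (intro block_bounds_add[OF A_nonneg B_nonneg _ _ sum_p_nonneg sum_p_nonneg block]) auto
    moreover have split: "(\<Sum>t\<in>{b-n..<b}. F t) = (\<Sum>t\<in>{(b-m)-n'..<b-m}. F t) + (\<Sum>t\<in>{b-m..<b}. F t)"
      for F :: "nat \<Rightarrow> real"
    proof -
      have "b - m - n' = b - n" using mn by simp
      then show ?thesis using mn less.prems by (metis sum.atLeastLessThan_concat diff_le_mono2 diff_le_self le_add1)
    qed
    ultimately show ?thesis using mn split[of h] split[of p] by (simp add: add.commute)
  qed
qed

lemma interval_bound:
  assumes r: "1 \<le> r" and rs: "r \<le> s"
  shows "(\<Sum>t\<in>{r..<s+1}. h t) \<le> cover_const * sqrt 2 * A * sqrt (real (s + 1 - r))
           + B * sqrt (real (s + 1 - r) * (\<Sum>t\<in>{r..<s+1}. p t))"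
proof -
  obtain c where c: "r \<le> c" "c \<le> s + 1"
      "\<forall>j. 2^j \<le> c - r \<longrightarrow> 2^j dvd c" "\<forall>j. 2^j \<le> s + 1 - c \<longrightarrow> 2^j dvd c"
    using exists_dyadic_split[OF r, of s] rs by (metis le_SucI Suc_eq_plus1)
  define n1 where "n1 = c - r"
  define n2 where "n2 = s + 1 - c"
  define P1 where "P1 = (\<Sum>t\<in>{r..<c}. p t)"
  define P2 where "P2 = (\<Sum>t\<in>{c..<s+1}. p t)"
  have left: "(\<Sum>t\<in>{r..<c}. h t) \<le> cover_const * A * sqrt n1 + B * sqrt (n1 * P1)"
    using bound_left_of_split[of c n1] c r unfolding n1_def P1_def by simp
  have right: "(\<Sum>t\<in>{c..<s+1}. h t) \<le> cover_const * A * sqrt n2 + B * sqrt (n2 * P2)"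
    using bound_right_of_split[of c n2] c r unfolding n2_def P2_def by simp
  have n: "real (s + 1 - r) = real n1 + real n2" unfolding n1_def n2_def using c by auto
  have "sqrt (real n1 * 1) + sqrt (real n2 * 1) \<le> sqrt ((real n1 + real n2) * (1 + 1))"
    by (intro sqrt_mult_add_le) auto
  moreover have "sqrt ((real n1 + real n2) * (1 + 1)) = sqrt 2 * sqrt (real n1 + real n2)"
    by (simp only: one_add_one real_sqrt_mult mult.commute)
  ultimately have "sqrt n1 + sqrt n2 \<le> sqrt 2 * sqrt (real n1 + real n2)" by simp
  then have "cover_const * A * (sqrt n1 + sqrt n2) \<le> cover_const * A * (sqrt 2 * sqrt (real n1 + real n2))"
    using A_nonneg unfolding cover_const_def by (intro mult_left_mono) auto
  moreover have "B * (sqrt (n1 * P1) + sqrt (n2 * P2)) \<le> B * sqrt ((real n1 + real n2) * (P1 + P2))"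
    unfolding P1_def P2_def using B_nonneg by (intro mult_left_mono sqrt_mult_add_le sum_p_nonneg) auto
  moreover have "(\<Sum>t\<in>{r..<s+1}. h t) = (\<Sum>t\<in>{r..<c}. h t) + (\<Sum>t\<in>{c..<s+1}. h t)"
    "(\<Sum>t\<in>{r..<s+1}. p t) = P1 + P2"
    unfolding P1_def P2_def using c sum.atLeastLessThan_concat by metis+
  ultimately show ?thesis using left right unfolding n by (simp add: algebra_simps)
qed

end

lemma c_prime_ge_1:
  assumes "1 \<le> s"
  shows "1 \<le> c_prime s"
proof -
  have "0 \<le> ln (real s)" "0 \<le> ln (1 + log 2 (real s))" "0 \<le> ln ((5 + 3 * ln (1 + real s)) / 2)"
    using assms by simp_all
  then show ?thesis unfolding c_prime_def by linarith
qed

lemma ln_total_budget_le: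
  assumes s: "1 \<le> s"
  shows "0 \<le> ln (total_budget s)" "ln (total_budget s) \<le> 2 * c_prime s"
proof -
  define L where "L = ln (1 + real s)"
  have L: "0 \<le> L" unfolding L_def by simp
  have "{1..<1 + 2^0} \<in> geo_started s" unfolding geo_started_def using s geo_intervalsI[of 1 0] by simp
  then have "card (geo_started s) \<noteq> 0" using finite_geo_started by auto
  then have card_ge_1: "1 \<le> real (card (geo_started s))" by simp
  have "1 * 1 \<le> real (card (geo_started s)) * (1 + 4 * L)" using card_ge_1 L by (intro mult_mono) auto
  then show "0 \<le> ln (total_budget s)" unfolding total_budget_def L_def by simp
  have log_nonneg: "0 \<le> log 2 (real s)" using s by simp
  have "ln (total_budget s) = ln (card (geo_started s)) + ln (1 + 4 * L)"
    unfolding total_budget_def L_def[symmetric] using card_ge_1 L by (simp add: ln_mult)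
  moreover have "ln (card (geo_started s)) \<le> ln (real s * (1 + log 2 (real s)))"
    using card_geo_started_le[OF s] card_ge_1 by simp
  moreover have "ln (real s * (1 + log 2 (real s))) = ln (real s) + ln (1 + log 2 (real s))"
  proof -
    have "0 < real s" "0 < 1 + log 2 (real s)" using s log_nonneg by linarith+
    then show ?thesis by (rule ln_mult_pos)
  qed
  moreover have "ln (1 + 4 * L) \<le> ln (4 * ((5 + 3 * L) / 2))" using L by simp
  moreover have "ln (4 * ((5 + 3 * L) / 2)) = 2 * ln 2 + ln ((5 + 3 * L) / 2)"
  proof -
    have "ln (4 * ((5 + 3 * L) / 2)) = ln 4 + ln ((5 + 3 * L) / 2)" using L by (intro ln_mult_pos) auto
    then show ?thesis using ln_realpow[of 2 2] by simp
  qed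
  ultimately have "ln (total_budget s) \<le> c_prime s + 2 * ln 2 - 1" unfolding c_prime_def L_def by linarith
  then show "ln (total_budget s) \<le> 2 * c_prime s" using ln_2_less_1 c_prime_ge_1[OF s] by linarith
qed

context oco
begin

lemma regret_on_geo_interval:
  fixes u :: "nat \<Rightarrow> 'a" and P :: real
  assumes J: "J \<in> geo_intervals" and end_J: "Min J + card J \<le> s + 1"
    and u: "\<forall>t\<in>{Min J..Min J + card J}. u t \<in> \<Omega>"
    and P: "(\<Sum>t\<in>J. norm (u (t+1) - u t)) \<le> P"
  shows "(\<Sum>t\<in>J. f t (play t) - f t (u t))
     \<le> (sqrt (3 * ln (total_budget s)) + ln (real_of_int (k_I P D) + 1) + sqrt 2 + 3*D*G) * sqrt (card J)
        + 3 * G * sqrt D * sqrt (card J * (\<Sum>t\<in>J. norm (u (t+1) - u t)))"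
proof -
  define a where "a = Min J"
  define L where "L = card J"
  define P\<^sub>J where "P\<^sub>J = (\<Sum>t\<in>J. norm (u (t+1) - u t))"
  have J_eq: "J = {a..<a+L}" unfolding a_def L_def by (rule geo_interval_eq[OF J])
  have sum_J: "(\<Sum>t\<in>J. F t) = (\<Sum>k<L. F (a+k))" for F :: "nat \<Rightarrow> real"
    unfolding J_eq by (simp add: sum.atLeastLessThan_shift_0 atLeast0LessThan)
  have P\<^sub>J: "0 \<le> P\<^sub>J" unfolding P\<^sub>J_def by (simp add: sum_nonneg)
  have "(\<Sum>t\<in>J. f t (expert J t) - f t (u t))
      = (\<Sum>k<L. f (a+k) (ader_play f g \<Omega> D G L a (x0 J) k) - f (a+k) (u (a+k)))"
    unfolding sum_J expert_def expert_play_def a_def L_def by simp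
  also have "\<dots> \<le> sqrt L * (ln (real (nat (k_I P\<^sub>J D)) + 1) + sqrt 2 + 3*D*G) + 3*G * sqrt (D*P\<^sub>J) * sqrt L"
    using ader_dynamic_regret[of a L "x0 J" u] geo_interval_Min_ge_1[OF J] geo_interval_card_pos[OF J]
      init_in_dom J u unfolding P\<^sub>J_def sum_J[of "\<lambda>t. norm (u (t+1) - u t)"] a_def L_def
    by (auto simp: add.assoc)
  finally have ader: "(\<Sum>t\<in>J. f t (expert J t) - f t (u t))
      \<le> sqrt L * (ln (real (nat (k_I P\<^sub>J D)) + 1) + sqrt 2 + 3*D*G) + 3*G * sqrt (D*P\<^sub>J) * sqrt L" .
  have "1 \<le> k_I P\<^sub>J D" "k_I P\<^sub>J D \<le> k_I P D"
    using k_I_ge_1[OF D_pos P\<^sub>J] k_I_mono[OF D_pos P\<^sub>J, of P] P unfolding P\<^sub>J_def by auto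
  then have "ln (real (nat (k_I P\<^sub>J D)) + 1) \<le> ln (real_of_int (k_I P D) + 1)" by simp
  then have "sqrt L * (ln (real (nat (k_I P\<^sub>J D)) + 1) + sqrt 2 + 3*D*G)
      \<le> sqrt L * (ln (real_of_int (k_I P D) + 1) + sqrt 2 + 3*D*G)"
    by (intro mult_left_mono) auto
  with ader have expert_regret: "(\<Sum>t\<in>J. f t (expert J t) - f t (u t))
      \<le> sqrt L * (ln (real_of_int (k_I P D) + 1) + sqrt 2 + 3*D*G) + 3*G * sqrt (D*P\<^sub>J) * sqrt L"
    by linarith
  have "(\<Sum>t\<in>J. inst_regret J t) \<le> sqrt (3 * ln (total_budget s)) * sqrt L"
    using meta_regret_le[OF J end_J] unfolding L_def by (simp add: real_sqrt_mult[symmetric] algebra_simps)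
  moreover have "(\<Sum>t\<in>J. f t (play t) - f t (u t))
      = (\<Sum>t\<in>J. inst_regret J t) + (\<Sum>t\<in>J. f t (expert J t) - f t (u t))"
    unfolding inst_regret_def by (simp add: sum.distrib[symmetric])
  moreover have "3*G * sqrt (D*P\<^sub>J) * sqrt L = 3 * G * sqrt D * sqrt (L * P\<^sub>J)"
    by (simp add: real_sqrt_mult)
  moreover have "(sqrt (3 * ln (total_budget s)) + ln (real_of_int (k_I P D) + 1) + sqrt 2 + 3*D*G) * sqrt L
      = sqrt (3 * ln (total_budget s)) * sqrt L + sqrt L * (ln (real_of_int (k_I P D) + 1) + sqrt 2 + 3*D*G)"
    by (simp add: algebra_simps)
  ultimately show ?thesis
    using expert_regret unfolding L_def[symmetric] P\<^sub>J_def[symmetric] by linarith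
qed

lemma regret_on_interval:
  assumes r: "1 \<le> r" and rs: "r \<le> s" and u: "\<forall>t\<in>{r..s+1}. u t \<in> \<Omega>"
  defines "P \<equiv> path_length u r s"
  shows "(\<Sum>t=r..s. f t (play t) - f t (u t))
    \<le> cover_const * sqrt 2 * (sqrt (3 * ln (total_budget s)) + ln (real_of_int (k_I P D) + 1) + sqrt 2 + 3*D*G)
         * sqrt (real (s - r + 1))
       + 3 * G * sqrt D * sqrt (real (s - r + 1) * P)"
proof -
  define A where "A = sqrt (3 * ln (total_budget s)) + ln (real_of_int (k_I P D) + 1) + sqrt 2 + 3*D*G"
  define p where "p = (\<lambda>t. norm (u (t+1) - u t))"
  have P: "P = (\<Sum>t\<in>{r..<s+1}. p t)"
    unfolding P_def path_length_def p_def by (simp add: atLeastLessThanSuc_atLeastAtMost)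
  have "0 \<le> A" unfolding A_def
    using ln_total_budget_le r rs k_I_ge_1[OF D_pos, of P] D_pos G_pos
    unfolding P_def path_length_def by (simp add: sum_nonneg)
  then interpret dyadic_block_bound "\<lambda>t. f t (play t) - f t (u t)" p A "3 * G * sqrt D" r s
  proof unfold_locales
    show "0 \<le> 3 * G * sqrt D" "\<And>t. 0 \<le> p t" using G_pos D_pos unfolding p_def by simp_all
    fix a k assume a: "1 \<le> a" "r \<le> a" "a + 2^k \<le> s + 1" "2^k dvd a"
    define J where "J = {a..<a + 2^k}"
    have J: "J \<in> geo_intervals" unfolding J_def using a by (intro geo_intervalsI)
    have "Min J = a" "card J = 2^k" unfolding J_def by (intro Min_eqI) auto
    moreover have "(\<Sum>t\<in>J. p t) \<le> P" unfolding P p_def J_def using a by (intro sum_mono2) auto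
    ultimately show "(\<Sum>t\<in>{a..<a+2^k}. f t (play t) - f t (u t))
        \<le> A * sqrt (2^k) + 3 * G * sqrt D * sqrt (2^k * (\<Sum>t\<in>{a..<a+2^k}. p t))"
      using regret_on_geo_interval[OF J, of s u P] a u unfolding A_def J_def p_def
      by (simp add: mult.commute)
  qed
  have "s + 1 - r = s - r + 1" using rs by simp
  then show ?thesis
    using interval_bound[OF r rs] unfolding A_def P by (simp add: atLeastLessThanSuc_atLeastAtMost)
qed

end

lemma final_constant_le:
  fixes c l\<^sub>X l\<^sub>k DG :: real
  assumes c: "1 \<le> c" and "0 \<le> l\<^sub>X" "l\<^sub>X \<le> 2 * c" and l\<^sub>k: "0 \<le> l\<^sub>k" and DG: "0 \<le> DG"
  shows "cover_const * sqrt 2 * (sqrt (3 * l\<^sub>X) + l\<^sub>k + sqrt 2 + 3 * DG)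
    \<le> 14 * sqrt c + 3 * (1 + 2 * l\<^sub>k) + 23 * DG"
proof -
  define \<kappa> where "\<kappa> = cover_const * sqrt 2"
  have "\<kappa> = sqrt (cover_const^2 * 2)" unfolding \<kappa>_def cover_const_def by (simp add: real_sqrt_mult)
  also have "\<dots> \<le> sqrt ((7/2)^2)" unfolding cover_const_def by (simp add: power2_eq_square)
  finally have \<kappa>: "0 \<le> \<kappa>" "\<kappa> \<le> 7/2" unfolding \<kappa>_def cover_const_def by simp_all
  have "sqrt (3 * l\<^sub>X) \<le> sqrt 6 * sqrt c" using assms by (simp add: real_sqrt_mult[symmetric])
  also have "\<dots> \<le> 5/2 * sqrt c"
    using c by (intro mult_right_mono real_le_lsqrt) (auto simp: power2_eq_square)
  finally have "\<kappa> * sqrt (3 * l\<^sub>X) \<le> 7/2 * (5/2 * sqrt c)" using \<kappa> assms by (intro mult_mono) auto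
  moreover have "\<kappa> * l\<^sub>k \<le> 6 * l\<^sub>k" using \<kappa> l\<^sub>k by (intro mult_right_mono) auto
  moreover have "\<kappa> * sqrt 2 \<le> 3 + 21/4 * sqrt c"
  proof -
    have "\<kappa> * sqrt 2 = 49/10" unfolding \<kappa>_def cover_const_def by (simp add: mult.assoc)
    moreover have "1 \<le> sqrt c" using c by simp
    ultimately show ?thesis by linarith
  qed
  moreover have "\<kappa> * (3 * DG) \<le> 7/2 * (3 * DG)" using \<kappa> DG by (intro mult_right_mono) auto
  ultimately show ?thesis unfolding \<kappa>_def[symmetric] using DG by (simp add: algebra_simps)
qed

theorem theorem5:
  fixes \<Omega> :: "'a::euclidean_space set"
    and f :: "nat \<Rightarrow> 'a \<Rightarrow> real" and g :: "nat \<Rightarrow> 'a \<Rightarrow> 'a"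
    and D G :: real
    and x0 :: "nat set \<Rightarrow> nat \<Rightarrow> 'a"
    and u :: "nat \<Rightarrow> 'a" and r s :: nat
  assumes "convex \<Omega>" and "closed \<Omega>"
    and "0 \<in> \<Omega>" and "\<forall>x\<in>\<Omega>. \<forall>y\<in>\<Omega>. norm (x - y) \<le> D"
    and "D > 0" and "G > 0"
    and "\<forall>t\<ge>1. convex_on \<Omega> (f t)"
    and "\<forall>t\<ge>1. \<forall>w\<in>\<Omega>. (f t has_derivative (\<lambda>h. g t w \<bullet> h)) (at w within \<Omega>)"
    and "\<forall>t\<ge>1. \<forall>w\<in>\<Omega>. norm (g t w) \<le> G"
    and "\<forall>t\<ge>1. \<forall>w\<in>\<Omega>. 0 \<le> f t w \<and> f t w \<le> 1"
    and "\<forall>J\<in>geo_intervals. \<forall>i\<ge>1. x0 J i \<in> \<Omega>"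
    and "1 \<le> r" and "r \<le> s"
    and "\<forall>t\<in>{r..s+1}. u t \<in> \<Omega>"
  shows "(\<Sum>t = r..s. f t (aoa f g \<Omega> D G x0 t)) - (\<Sum>t = r..s. f t (u t))
      \<le> (14 * sqrt (c_prime s) + 3 * (1 + 2 * ln (real_of_int (k_I (path_length u r s) D) + 1)) + 23 * D * G)
           * sqrt (real (s - r + 1))
        + 5 * G * sqrt (D * path_length u r s) * sqrt (real (s - r + 1))"
proof -
  interpret oco \<Omega> f g D G x0
    using assms by unfold_locales auto
  define P where "P = path_length u r s"
  define n where "n = real (s - r + 1)"
  have s: "1 \<le> s" and P: "0 \<le> P" using assms unfolding P_def path_length_def by (auto simp: sum_nonneg)
  have "cover_const * sqrt 2 * (sqrt (3 * ln (total_budget s)) + ln (real_of_int (k_I P D) + 1) + sqrt 2 + 3*D*G)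
      \<le> 14 * sqrt (c_prime s) + 3 * (1 + 2 * ln (real_of_int (k_I P D) + 1)) + 23 * D * G"
    using final_constant_le[OF c_prime_ge_1[OF s] ln_total_budget_le[OF s], of _ "D * G"]
      k_I_ge_1[OF D_pos P] D_pos G_pos
    by (simp add: mult.assoc)
  then have "cover_const * sqrt 2 * (sqrt (3 * ln (total_budget s)) + ln (real_of_int (k_I P D) + 1) + sqrt 2 + 3*D*G) * sqrt n
      \<le> (14 * sqrt (c_prime s) + 3 * (1 + 2 * ln (real_of_int (k_I P D) + 1)) + 23 * D * G) * sqrt n"
    by (rule mult_right_mono) (simp add: n_def)
  moreover have "3 * G * sqrt D * sqrt (n * P) \<le> 5 * G * sqrt (D * P) * sqrt n"
  proof -
    have "3 * G * sqrt D * sqrt (n * P) = 3 * (G * sqrt (D * P) * sqrt n)" by (simp add: real_sqrt_mult)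
    also have "\<dots> \<le> 5 * (G * sqrt (D * P) * sqrt n)"
      using G_pos D_pos P by (intro mult_right_mono) (auto simp: n_def)
    finally show ?thesis by (simp add: mult.assoc)
  qed
  moreover have "(\<Sum>t = r..s. f t (aoa f g \<Omega> D G x0 t)) - (\<Sum>t = r..s. f t (u t))
      \<le> cover_const * sqrt 2 * (sqrt (3 * ln (total_budget s)) + ln (real_of_int (k_I P D) + 1) + sqrt 2 + 3*D*G)
          * sqrt n + 3 * G * sqrt D * sqrt (n * P)"
    using regret_on_interval[of r s u] assms unfolding P_def n_def play_def by (simp add: sum_subtractf)
  ultimately show ?thesis unfolding P_def[symmetric] n_def[symmetric] by linarith
qed

end
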